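(* Let $A$ be an associative unital algebra and $(H,\pi_l,\pi_r,\psi_l,\psi_r)$ an L-R-twisting datum for $A$, where $H$ is a Hopf algebra with bijective antipode $S$. Define $\pi:(H\otimes H^{op})\otimes A\to A$, $\pi(h\otimes h'\otimes a)=h\cdot a\cdot h'$, and $\psi:A\to(H\otimes H^{op})\otimes A$, $\psi(a)=(a_{\{-1\}}\otimes S^{-1}(a_{\{1\}}))\otimes a_{\{0\}}$. Then $(H\otimes H^{op},\pi,\psi)$ is a left twisting datum for $A$, and the map $\lambda:(A,\bullet)\to(A,\star)$, $\lambda(a)=a_{<0>}\cdot S^{-1}(a_{<1>})$, is an algebra isomorphism with inverse $\lambda^{-1}(a)=a_{<0>}\cdot a_{<1>}$.
   Context: Work over a field $k$. An L-R-twisting datum for an algebra $A$: $H$-bimodule algebra structure on $A$ (actions $h\cdot a$, $a\cdot h$, with $h\cdot(ab)=(h_1\cdot a)(h_2\cdot b)$, $(ab)\cdot h=(a\cdot h_1)(b\cdot h_2)$, $h\cdot1=1\cdot h=\varepsilon(h)1$), $H$-bicomodule algebra structure on $A$ (algebra maps $\psi_l(a)=a_{[-1]}\otimes a_{[0]}$, $\psi_r(a)=a_{<0>}\otimes a_{<1>}$ forming an $H$-bicomodule), and compatibilities $(h\cdot a)_{[-1]}\otimes(h\cdot a)_{[0]}=a_{[-1]}\otimes h\cdot a_{[0]}$, $(h\cdot a)_{<0>}\otimes(h\cdot a)_{<1>}=h\cdot a_{<0>}\otimes a_{<1>}$, $(a\cdot h)_{[-1]}\otimes(a\cdot h)_{[0]}=a_{[-1]}\otimes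 a_{[0]}\cdot h$, $(a\cdot h)_{<0>}\otimes(a\cdot h)_{<1>}=a_{<0>}\cdot h\otimes a_{<1>}$. The L-R-twisted product is $a\bullet b=(a_{[0]}\cdot b_{<1>})(a_{[-1]}\cdot b_{<0>})$. Notation $a_{\{-1\}}\otimes a_{\{0\}}\otimes a_{\{1\}}=a_{<0>_{[-1]}}\otimes a_{<0>_{[0]}}\otimes a_{<1>}=a_{[-1]}\otimes a_{[0]_{<0>}}\otimes a_{[0]_{<1>}}$. A left twisting datum $(K,\pi,\psi)$ for $A$ ($K$ a bialgebra): $A$ is a left $K$-module algebra ($k\cdot a$) and left $K$-comodule algebra ($a\mapsto a_{(-1)}\otimes a_{(0)}$) with $(k\cdot a)_{(-1)}\otimes(k\cdot a)_{(0)}=a_{(-1)}\otimes k\cdot a_{(0)}$; the left twisted product is $a\star b=a_{(0)}(a_{(-1)}\cdot b)$. Here $\star$ is the left twisted product for $(H\otimes H^{op},\pi,\psi)$. *)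

theory Defs
  imports Complex_Main "HOL-Library.Function_Algebras"
begin

definition lin_on :: "'v set \<Rightarrow> ('k::field \<Rightarrow> 'v::ab_group_add \<Rightarrow> 'v)
    \<Rightarrow> ('k \<Rightarrow> 'w::ab_group_add \<Rightarrow> 'w) \<Rightarrow> ('v \<Rightarrow> 'w) \<Rightarrow> bool" where
  "lin_on C s1 s2 f \<longleftrightarrow>
     (\<forall>x\<in>C. \<forall>y\<in>C. f (x + y) = f x + f y) \<and> (\<forall>c. \<forall>x\<in>C. f (s1 c x) = s2 c (f x))"

definition bilin_on :: "'u set \<Rightarrow> 'v set \<Rightarrow> ('k::field \<Rightarrow> 'u::ab_group_add \<Rightarrow> 'u)
    \<Rightarrow> ('k \<Rightarrow> 'v::ab_group_add \<Rightarrow> 'v) \<Rightarrow> ('k \<Rightarrow> 'w::ab_group_add \<Rightarrow> 'w)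
    \<Rightarrow> ('u \<Rightarrow> 'v \<Rightarrow> 'w) \<Rightarrow> bool" where
  "bilin_on C D s1 s2 s3 \<beta> \<longleftrightarrow>
     (\<forall>w\<in>D. lin_on C s1 s3 (\<lambda>v. \<beta> v w)) \<and> (\<forall>v\<in>C. lin_on D s2 s3 (\<beta> v))"

definition subsp :: "'v set \<Rightarrow> ('k::field \<Rightarrow> 'v::ab_group_add \<Rightarrow> 'v) \<Rightarrow> bool" where
  "subsp C s \<longleftrightarrow> vector_space s \<and> 0 \<in> C \<and> (\<forall>x\<in>C. \<forall>y\<in>C. x + y \<in> C) \<and> (\<forall>c. \<forall>x\<in>C. s c x \<in> C)"

text \<open>An element of V \<otimes> W is represented by the functional it induces on bilinear
  forms V \<times> W \<rightarrow> k (and 0 on non-bilinear maps). Since bilinear forms separate the points of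
  V \<otimes> W over a field, the span of the simple tensors below is canonically isomorphic to
  the algebraic tensor product V \<otimes>_k W.\<close>

type_synonym ('v, 'w, 'k) tensor = "('v \<Rightarrow> 'w \<Rightarrow> 'k) \<Rightarrow> 'k"

definition tens :: "('k::field \<Rightarrow> 'v::ab_group_add \<Rightarrow> 'v) \<Rightarrow> ('k \<Rightarrow> 'w::ab_group_add \<Rightarrow> 'w)
    \<Rightarrow> 'v \<Rightarrow> 'w \<Rightarrow> ('v, 'w, 'k) tensor" where
  "tens sv sw v w = (\<lambda>\<phi>. if bilin_on UNIV UNIV sv sw (*) \<phi> then \<phi> v w else 0)"

text \<open>scalar multiplication on tensors (addition is pointwise)\<close>
definition tscale :: "'k::field \<Rightarrow> ('b \<Rightarrow> 'k) \<Rightarrow> ('b \<Rightarrow> 'k)" where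
  "tscale c t = (\<lambda>\<phi>. c * t \<phi>)"

definition tspace :: "'v set \<Rightarrow> 'w set \<Rightarrow> ('k::field \<Rightarrow> 'v::ab_group_add \<Rightarrow> 'v)
    \<Rightarrow> ('k \<Rightarrow> 'w::ab_group_add \<Rightarrow> 'w) \<Rightarrow> ('v, 'w, 'k) tensor set" where
  "tspace C D sv sw = {t. \<exists>xs. set xs \<subseteq> C \<times> D \<and> t = sum_list (map (\<lambda>(v, w). tens sv sw v w) xs)}"

text \<open>linear map C \<otimes> D \<rightarrow> U induced by a bilinear map \<beta> (universal property):
  \<open>tlift \<beta> (\<Sum> v_i \<otimes> w_i) = \<Sum> \<beta> v_i w_i\<close>\<close>
definition tlift :: "'v set \<Rightarrow> 'w set \<Rightarrow> ('k::field \<Rightarrow> 'v::ab_group_add \<Rightarrow> 'v)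
    \<Rightarrow> ('k \<Rightarrow> 'w::ab_group_add \<Rightarrow> 'w) \<Rightarrow> ('v \<Rightarrow> 'w \<Rightarrow> 'u::monoid_add) \<Rightarrow> ('v, 'w, 'k) tensor \<Rightarrow> 'u" where
  "tlift C D sv sw \<beta> t = sum_list (map (\<lambda>(v, w). \<beta> v w)
      (SOME xs. set xs \<subseteq> C \<times> D \<and> t = sum_list (map (\<lambda>(v, w). tens sv sw v w) xs)))"

definition tmap where
  "tmap C D sv sw sv' sw' f g t = tlift C D sv sw (\<lambda>v w. tens sv' sw' (f v) (g w)) t"

definition tassoc where
  "tassoc C1 C2 C3 s1 s2 s3 t =
     tlift (tspace C1 C2 s1 s2) C3 tscale s3
       (\<lambda>x w. tlift C1 C2 s1 s2 (\<lambda>u v. tens s1 tscale u (tens s2 s3 v w)) x) t"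

definition tmult where
  "tmult C D sv sw mv mw x y =
     tlift C D sv sw (\<lambda>a b. tlift C D sv sw (\<lambda>c d. tens sv sw (mv a c) (mw b d)) y) x"

definition alg where
  "alg C s m u \<longleftrightarrow> subsp C s \<and> u \<in> C \<and> (\<forall>x\<in>C. \<forall>y\<in>C. m x y \<in> C) \<and> bilin_on C C s s s m
     \<and> (\<forall>x\<in>C. \<forall>y\<in>C. \<forall>z\<in>C. m (m x y) z = m x (m y z)) \<and> (\<forall>x\<in>C. m u x = x \<and> m x u = x)"

definition coalg where
  "coalg C s \<Delta> \<epsilon> \<longleftrightarrow> subsp C s \<and> (\<forall>x\<in>C. \<Delta> x \<in> tspace C C s s)
     \<and> lin_on C s tscale \<Delta> \<and> lin_on C s (*) \<epsilon>
     \<and> (\<forall>x\<in>C. tassoc C C C s s s (tmap C C s s tscale s \<Delta> id (\<Delta> x))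
                = tmap C C s s s tscale id \<Delta> (\<Delta> x))
     \<and> (\<forall>x\<in>C. tlift C C s s (\<lambda>a b. s (\<epsilon> a) b) (\<Delta> x) = x
              \<and> tlift C C s s (\<lambda>a b. s (\<epsilon> b) a) (\<Delta> x) = x)"

definition bialg where
  "bialg C s m u \<Delta> \<epsilon> \<longleftrightarrow> alg C s m u \<and> coalg C s \<Delta> \<epsilon>
     \<and> (\<forall>x\<in>C. \<forall>y\<in>C. \<Delta> (m x y) = tmult C C s s m m (\<Delta> x) (\<Delta> y)) \<and> \<Delta> u = tens s s u u
     \<and> (\<forall>x\<in>C. \<forall>y\<in>C. \<epsilon> (m x y) = \<epsilon> x * \<epsilon> y) \<and> \<epsilon> u = 1"

definition hopf where
  "hopf C s m u \<Delta> \<epsilon> S \<longleftrightarrow> bialg C s m u \<Delta> \<epsilon> \<and> (\<forall>x\<in>C. S x \<in> C) \<and> lin_on C s s S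
     \<and> (\<forall>x\<in>C. tlift C C s s (\<lambda>a b. m (S a) b) (\<Delta> x) = s (\<epsilon> x) u
              \<and> tlift C C s s (\<lambda>a b. m a (S b)) (\<Delta> x) = s (\<epsilon> x) u)"

definition lmod_alg where
  "lmod_alg CK sk mk uk \<Delta>k \<epsilon>k CA sa ma ua act \<longleftrightarrow>
     (\<forall>x\<in>CK. \<forall>a\<in>CA. act x a \<in> CA) \<and> bilin_on CK CA sk sa sa act
     \<and> (\<forall>x\<in>CK. \<forall>y\<in>CK. \<forall>a\<in>CA. act (mk x y) a = act x (act y a)) \<and> (\<forall>a\<in>CA. act uk a = a)
     \<and> (\<forall>x\<in>CK. \<forall>a\<in>CA. \<forall>b\<in>CA.
          act x (ma a b) = tlift CK CK sk sk (\<lambda>x1 x2. ma (act x1 a) (act x2 b)) (\<Delta>k x))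
     \<and> (\<forall>x\<in>CK. act x ua = sa (\<epsilon>k x) ua)"

definition rmod_alg where
  "rmod_alg CH sh mh uh \<Delta>h \<epsilon>h CA sa ma ua ract \<longleftrightarrow>
     (\<forall>a\<in>CA. \<forall>x\<in>CH. ract a x \<in> CA) \<and> bilin_on CA CH sa sh sa ract
     \<and> (\<forall>x\<in>CH. \<forall>y\<in>CH. \<forall>a\<in>CA. ract a (mh x y) = ract (ract a x) y) \<and> (\<forall>a\<in>CA. ract a uh = a)
     \<and> (\<forall>x\<in>CH. \<forall>a\<in>CA. \<forall>b\<in>CA.
          ract (ma a b) x = tlift CH CH sh sh (\<lambda>x1 x2. ma (ract a x1) (ract b x2)) (\<Delta>h x))
     \<and> (\<forall>x\<in>CH. ract ua x = sa (\<epsilon>h x) ua)"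

definition lcomod_alg where
  "lcomod_alg CK sk mk uk \<Delta>k \<epsilon>k CA sa ma ua \<rho> \<longleftrightarrow>
     (\<forall>a\<in>CA. \<rho> a \<in> tspace CK CA sk sa) \<and> lin_on CA sa tscale \<rho>
     \<and> (\<forall>a\<in>CA. tassoc CK CK CA sk sk sa (tmap CK CA sk sa tscale sa \<Delta>k id (\<rho> a))
                = tmap CK CA sk sa sk tscale id \<rho> (\<rho> a))
     \<and> (\<forall>a\<in>CA. tlift CK CA sk sa (\<lambda>x b. sa (\<epsilon>k x) b) (\<rho> a) = a)
     \<and> (\<forall>a\<in>CA. \<forall>b\<in>CA. \<rho> (ma a b) = tmult CK CA sk sa mk ma (\<rho> a) (\<rho> b))
     \<and> \<rho> ua = tens sk sa uk ua"

definition rcomod_alg where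
  "rcomod_alg CH sh mh uh \<Delta>h \<epsilon>h CA sa ma ua \<rho> \<longleftrightarrow>
     (\<forall>a\<in>CA. \<rho> a \<in> tspace CA CH sa sh) \<and> lin_on CA sa tscale \<rho>
     \<and> (\<forall>a\<in>CA. tassoc CA CH CH sa sh sh (tmap CA CH sa sh tscale sh \<rho> id (\<rho> a))
                = tmap CA CH sa sh sa tscale id \<Delta>h (\<rho> a))
     \<and> (\<forall>a\<in>CA. tlift CA CH sa sh (\<lambda>b x. sa (\<epsilon>h x) b) (\<rho> a) = a)
     \<and> (\<forall>a\<in>CA. \<forall>b\<in>CA. \<rho> (ma a b) = tmult CA CH sa sh ma mh (\<rho> a) (\<rho> b))
     \<and> \<rho> ua = tens sa sh ua uh"

definition lr_datum :: "('k::field \<Rightarrow> 'h::ring_1 \<Rightarrow> 'h) \<Rightarrow> ('h \<Rightarrow> ('h, 'h, 'k) tensor) \<Rightarrow> ('h \<Rightarrow> 'k)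
    \<Rightarrow> ('k \<Rightarrow> 'a::ring_1 \<Rightarrow> 'a) \<Rightarrow> ('h \<Rightarrow> 'a \<Rightarrow> 'a) \<Rightarrow> ('a \<Rightarrow> 'h \<Rightarrow> 'a)
    \<Rightarrow> ('a \<Rightarrow> ('h, 'a, 'k) tensor) \<Rightarrow> ('a \<Rightarrow> ('a, 'h, 'k) tensor) \<Rightarrow> bool" where
  "lr_datum sh \<Delta> \<epsilon> sa lact ract psil psir \<longleftrightarrow>
     bialg UNIV sh (*) 1 \<Delta> \<epsilon> \<and> alg UNIV sa (*) 1
     \<comment> \<open>H-bimodule algebra\<close>
     \<and> lmod_alg UNIV sh (*) 1 \<Delta> \<epsilon> UNIV sa (*) 1 lact
     \<and> rmod_alg UNIV sh (*) 1 \<Delta> \<epsilon> UNIV sa (*) 1 ract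
     \<and> (\<forall>h g a. ract (lact h a) g = lact h (ract a g))
     \<comment> \<open>H-bicomodule algebra\<close>
     \<and> lcomod_alg UNIV sh (*) 1 \<Delta> \<epsilon> UNIV sa (*) 1 psil
     \<and> rcomod_alg UNIV sh (*) 1 \<Delta> \<epsilon> UNIV sa (*) 1 psir
     \<and> (\<forall>a. tassoc UNIV UNIV UNIV sh sa sh (tmap UNIV UNIV sa sh tscale sh psil id (psir a))
             = tmap UNIV UNIV sh sa sh tscale id psir (psil a))
     \<comment> \<open>compatibilities\<close>
     \<and> (\<forall>h a. psil (lact h a) = tmap UNIV UNIV sh sa sh sa id (lact h) (psil a))
     \<and> (\<forall>h a. psir (lact h a) = tmap UNIV UNIV sa sh sa sh (lact h) id (psir a))
     \<and> (\<forall>h a. psil (ract a h) = tmap UNIV UNIV sh sa sh sa id (\<lambda>b. ract b h) (psil a))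
     \<and> (\<forall>h a. psir (ract a h) = tmap UNIV UNIV sa sh sa sh (\<lambda>b. ract b h) id (psir a))"

text \<open>L-R-twisted product  a \<bullet> b = (a_[0] \<cdot> b_<1>)(a_[-1] \<cdot> b_<0>)\<close>
definition lr_prod where
  "lr_prod sh sa lact ract psil psir a b =
     tlift UNIV UNIV sh sa (\<lambda>h a0. tlift UNIV UNIV sa sh
        (\<lambda>b0 h1. ract a0 h1 * lact h b0) (psir b)) (psil a)"

definition left_twisting_datum where
  "left_twisting_datum CK sk mk uk \<Delta>k \<epsilon>k CA sa ma ua \<pi> \<psi> \<longleftrightarrow>
     bialg CK sk mk uk \<Delta>k \<epsilon>k \<and> alg CA sa ma ua
     \<and> lmod_alg CK sk mk uk \<Delta>k \<epsilon>k CA sa ma ua \<pi>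
     \<and> lcomod_alg CK sk mk uk \<Delta>k \<epsilon>k CA sa ma ua \<psi>
     \<and> (\<forall>x\<in>CK. \<forall>a\<in>CA. \<psi> (\<pi> x a) = tmap CK CA sk sa sk sa id (\<pi> x) (\<psi> a))"

text \<open>left twisted product  a \<star> b = a_(0) (a_(-1) \<cdot> b)\<close>
definition lt_prod where
  "lt_prod CK CA sk sa ma \<pi> \<psi> a b = tlift CK CA sk sa (\<lambda>x c. ma c (\<pi> x b)) (\<psi> a)"

definition hhop_carrier where "hhop_carrier sh = tspace UNIV UNIV sh sh"

definition hhop_mult where
  "hhop_mult sh = tmult UNIV UNIV sh sh (*) (\<lambda>a b. b * a)"

definition hhop_unit where "hhop_unit sh = tens sh sh 1 1"

definition hhop_comult where
  "hhop_comult sh \<Delta> t = tlift UNIV UNIV sh sh (\<lambda>h h'.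
      tlift UNIV UNIV sh sh (\<lambda>h1 h2. tlift UNIV UNIV sh sh (\<lambda>g1 g2.
         tens tscale tscale (tens sh sh h1 g1) (tens sh sh h2 g2)) (\<Delta> h')) (\<Delta> h)) t"

definition hhop_counit where
  "hhop_counit sh \<epsilon> t = tlift UNIV UNIV sh sh (\<lambda>h h'. \<epsilon> h * \<epsilon> h') t"

definition pi_act where
  "pi_act sh lact ract t a = tlift UNIV UNIV sh sh (\<lambda>h h'. ract (lact h a) h') t"

text \<open>\<psi>(a) = (a_{-1} \<otimes> S^{-1}(a_{1})) \<otimes> a_{0}, where
  a_{-1} \<otimes> a_{0} \<otimes> a_{1} = a_<0>_[-1] \<otimes> a_<0>_[0] \<otimes> a_<1>\<close>
definition psi_coact where
  "psi_coact sh sa S psil psir a =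
     tlift UNIV UNIV sa sh (\<lambda>x h'. tlift UNIV UNIV sh sa
        (\<lambda>h b. tens tscale sa (tens sh sh h (inv S h')) b) (psil x)) (psir a)"

definition lam where
  "lam sa sh S ract psir a = tlift UNIV UNIV sa sh (\<lambda>b h. ract b (inv S h)) (psir a)"

definition lam_inv where
  "lam_inv sa sh ract psir a = tlift UNIV UNIV sa sh (\<lambda>b h. ract b h) (psir a)"

definition alg_hom where
  "alg_hom C1 s1 m1 u1 C2 s2 m2 u2 f \<longleftrightarrow> (\<forall>x\<in>C1. f x \<in> C2) \<and> lin_on C1 s1 s2 f
     \<and> (\<forall>x\<in>C1. \<forall>y\<in>C1. f (m1 x y) = m2 (f x) (f y)) \<and> f u1 = u2"

definition alg_iso_with_inv where
  "alg_iso_with_inv C1 s1 m1 u1 C2 s2 m2 u2 f g \<longleftrightarrow> alg_hom C1 s1 m1 u1 C2 s2 m2 u2 f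
     \<and> (\<forall>x\<in>C1. g (f x) = x) \<and> (\<forall>y\<in>C2. g y \<in> C1 \<and> f (g y) = y)"

end

theory Submission
  imports Defs
begin

text \<open>Write \<open>S'\<close> for the inverse of the antipode. The coaction
  \<open>\<psi>(a) = (a_{-1} \<otimes> S'(a_{1})) \<otimes> a_{0}\<close> makes \<open>A\<close> a left \<open>H \<otimes> H\<^sup>o\<^sup>p\<close>-comodule algebra
  because \<open>S'\<close> reverses both products and coproducts, which exactly compensates the opposite
  multiplication in the second factor; with \<open>\<pi>(h \<otimes> h') a = h\<cdot>a\<cdot>h'\<close> this gives a left twisting
  datum. The map \<open>\<lambda>(a) = a_<0>\<cdot>S'(a_<1>)\<close> is inverted by \<open>a \<mapsto> a_<0>\<cdot>a_<1>\<close> thanks to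
  coassociativity of \<open>\<psi>\<^sub>r\<close> and \<open>\<Sum> S'(h\<^sub>2) h\<^sub>1 = \<Sum> h\<^sub>2 S'(h\<^sub>1) = \<epsilon>(h) 1\<close>. Finally
  \<open>\<lambda>(a \<bullet> b)\<close> and \<open>\<lambda>(a) \<star> \<lambda>(b)\<close> are expanded, using the comodule algebra axioms, the
  bicomodule condition and the compatibility of \<open>\<psi>\<^sub>r\<close> with both actions, into the same
  iterated Sweedler sum.

  Tensors are handled only through \<^const>\<open>tlift\<close>, the evaluation of a tensor on a bilinear map,
  which is well defined because bilinear forms separate tensors.\<close>

lemma lin_onI:
  "(\<And>x y. x \<in> C \<Longrightarrow> y \<in> C \<Longrightarrow> f (x + y) = f x + f y) \<Longrightarrow> (\<And>c x. x \<in> C \<Longrightarrow> f (s1 c x) = s2 c (f x))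
   \<Longrightarrow> lin_on C s1 s2 f"
  unfolding lin_on_def by auto

lemma lin_onD:
  "lin_on C s1 s2 f \<Longrightarrow> x \<in> C \<Longrightarrow> y \<in> C \<Longrightarrow> f (x + y) = f x + f y"
  "lin_on C s1 s2 f \<Longrightarrow> x \<in> C \<Longrightarrow> f (s1 c x) = s2 c (f x)"
  unfolding lin_on_def by auto

lemma lin_on_zero: "lin_on M s1 s2 f \<Longrightarrow> 0 \<in> M \<Longrightarrow> f 0 = 0"
  using lin_onD(1)[of M s1 s2 f 0 0] by simp

lemma lin_on_comp:
  "lin_on M s1 s2 f \<Longrightarrow> (\<And>x. x \<in> M \<Longrightarrow> f x \<in> N) \<Longrightarrow> lin_on N s2 s3 g \<Longrightarrow> lin_on M s1 s3 (\<lambda>x. g (f x))"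
  unfolding lin_on_def by auto

lemma bilin_onI:
  assumes "\<And>x y z. x \<in> C \<Longrightarrow> y \<in> C \<Longrightarrow> z \<in> D \<Longrightarrow> \<beta> (x + y) z = \<beta> x z + \<beta> y z"
    and "\<And>x z c. x \<in> C \<Longrightarrow> z \<in> D \<Longrightarrow> \<beta> (s1 c x) z = s3 c (\<beta> x z)"
    and "\<And>x y z. x \<in> C \<Longrightarrow> y \<in> D \<Longrightarrow> z \<in> D \<Longrightarrow> \<beta> x (y + z) = \<beta> x y + \<beta> x z"
    and "\<And>x z c. x \<in> C \<Longrightarrow> z \<in> D \<Longrightarrow> \<beta> x (s2 c z) = s3 c (\<beta> x z)"
  shows "bilin_on C D s1 s2 s3 \<beta>"
  using assms unfolding bilin_on_def lin_on_def by blast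

lemma bilin_onD:
  assumes "bilin_on C D s1 s2 s3 \<beta>"
  shows "x \<in> C \<Longrightarrow> y \<in> C \<Longrightarrow> z \<in> D \<Longrightarrow> \<beta> (x + y) z = \<beta> x z + \<beta> y z"
    and "x \<in> C \<Longrightarrow> z \<in> D \<Longrightarrow> \<beta> (s1 c x) z = s3 c (\<beta> x z)"
    and "x' \<in> C \<Longrightarrow> y' \<in> D \<Longrightarrow> z' \<in> D \<Longrightarrow> \<beta> x' (y' + z') = \<beta> x' y' + \<beta> x' z'"
    and "x' \<in> C \<Longrightarrow> z' \<in> D \<Longrightarrow> \<beta> x' (s2 c z') = s3 c (\<beta> x' z')"
  using assms unfolding bilin_on_def lin_on_def by blast+

lemma bilin_on_linI:
  "(\<And>w. w \<in> D \<Longrightarrow> lin_on C s1 s3 (\<lambda>v. \<beta> v w)) \<Longrightarrow> (\<And>v. v \<in> C \<Longrightarrow> lin_on D s2 s3 (\<lambda>w. \<beta> v w))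
   \<Longrightarrow> bilin_on C D s1 s2 s3 \<beta>"
  unfolding bilin_on_def by auto

lemma bilin_on_linD:
  "bilin_on C D s1 s2 s3 \<beta> \<Longrightarrow> w \<in> D \<Longrightarrow> lin_on C s1 s3 (\<lambda>v. \<beta> v w)"
  "bilin_on C D s1 s2 s3 \<beta> \<Longrightarrow> v \<in> C \<Longrightarrow> lin_on D s2 s3 (\<lambda>w. \<beta> v w)"
  unfolding bilin_on_def by auto

lemma lin_on_bilin_left:
  "bilin_on UNIV UNIV s1 s2 s3 \<beta> \<Longrightarrow> lin_on M s0 s1 f \<Longrightarrow> lin_on M s0 s3 (\<lambda>x. \<beta> (f x) c)"
  by (rule lin_onI) (auto simp: lin_onD bilin_onD)

lemma lin_on_bilin_right:
  "bilin_on UNIV UNIV s1 s2 s3 \<beta> \<Longrightarrow> lin_on M s0 s2 f \<Longrightarrow> lin_on M s0 s3 (\<lambda>x. \<beta> c (f x))"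
  by (rule lin_onI) (auto simp: lin_onD bilin_onD)

lemma lin_on_bilin_curry: "bilin_on UNIV UNIV s1 s2 s3 \<beta> \<Longrightarrow> lin_on UNIV s2 s3 (\<beta> c)"
  by (auto dest: bilin_on_linD)

definition trilin_on where
  "trilin_on C1 C2 C3 s1 s2 s3 su \<beta> \<longleftrightarrow>
     (\<forall>w\<in>C3. bilin_on C1 C2 s1 s2 su (\<lambda>u v. \<beta> u v w)) \<and> (\<forall>u\<in>C1. \<forall>v\<in>C2. lin_on C3 s3 su (\<beta> u v))"

lemma trilin_onI:
  "(\<And>w. w \<in> C3 \<Longrightarrow> bilin_on C1 C2 s1 s2 su (\<lambda>u v. \<beta> u v w)) \<Longrightarrow>
   (\<And>u v. u \<in> C1 \<Longrightarrow> v \<in> C2 \<Longrightarrow> lin_on C3 s3 su (\<lambda>w. \<beta> u v w)) \<Longrightarrow> trilin_on C1 C2 C3 s1 s2 s3 su \<beta>"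
  unfolding trilin_on_def by auto

lemma trilin_onD:
  "trilin_on C1 C2 C3 s1 s2 s3 su \<beta> \<Longrightarrow> w \<in> C3 \<Longrightarrow> bilin_on C1 C2 s1 s2 su (\<lambda>u v. \<beta> u v w)"
  "trilin_on C1 C2 C3 s1 s2 s3 su \<beta> \<Longrightarrow> u \<in> C1 \<Longrightarrow> v \<in> C2 \<Longrightarrow> lin_on C3 s3 su (\<lambda>w. \<beta> u v w)"
  unfolding trilin_on_def by auto

lemma trilin_on_bilin12:
  "trilin_on C1 C2 C3 s1 s2 s3 su \<beta> \<Longrightarrow> w \<in> C3 \<Longrightarrow> bilin_on C1 C2 s1 s2 su (\<lambda>u v. \<beta> u v w)"
  by (auto dest: trilin_onD)

lemma trilin_on_bilin23:
  "trilin_on C1 C2 C3 s1 s2 s3 su \<beta> \<Longrightarrow> u \<in> C1 \<Longrightarrow> bilin_on C2 C3 s2 s3 su (\<lambda>v w. \<beta> u v w)"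
  by (rule bilin_on_linI) (auto dest: trilin_onD bilin_on_linD)

lemma vector_spaceD:
  assumes "vector_space s"
  shows "s c (x + y) = s c x + s c y" "s c 0 = 0" "s (a + b) x = s a x + s b x" "s a (s b x) = s (a * b) x"
    "s 1 x = x" "s 0 x = 0" "s c (x - y) = s c x - s c y" "s c (- x) = - s c x"
proof -
  interpret vector_space s by fact
  show "s c (x + y) = s c x + s c y" "s c 0 = 0" "s (a + b) x = s a x + s b x" "s a (s b x) = s (a * b) x"
    "s 1 x = x" "s 0 x = 0" "s c (x - y) = s c x - s c y" "s c (- x) = - s c x"
    by (auto simp: scale_right_distrib scale_left_distrib scale_right_diff_distrib)
qed

lemma vector_space_mult: "vector_space ((*) :: 'k::field \<Rightarrow> 'k \<Rightarrow> 'k)"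
  by unfold_locales (auto simp: algebra_simps)

lemma vector_space_tscale: "vector_space (tscale :: 'k::field \<Rightarrow> ('b \<Rightarrow> 'k) \<Rightarrow> _)"
  by unfold_locales (auto simp: tscale_def algebra_simps fun_eq_iff)

lemma tscale_mult: "tscale (a * b) t = tscale a (tscale b t)"
  by (simp add: tscale_def mult.assoc)

lemma tscale_sum_list: "tscale c (sum_list xs) = sum_list (map (tscale c) xs)"
  by (induction xs) (simp_all add: tscale_def fun_eq_iff algebra_simps)

lemma subsp_UNIV: "vector_space s \<Longrightarrow> subsp UNIV s"
  unfolding subsp_def by auto

lemma subsp_vector_space: "subsp C s \<Longrightarrow> vector_space s"
  unfolding subsp_def by auto

lemma subspD:
  "subsp C s \<Longrightarrow> 0 \<in> C" "subsp C s \<Longrightarrow> x \<in> C \<Longrightarrow> y \<in> C \<Longrightarrow> x + y \<in> C"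
  "subsp C s \<Longrightarrow> x \<in> C \<Longrightarrow> s c x \<in> C"
  unfolding subsp_def by auto

lemma linearD:
  assumes "Vector_Spaces.linear s1 s2 f"
  shows "f (x + y) = f x + f y" "f (s1 c x) = s2 c (f x)" "f 0 = 0" "f (x - y) = f x - f y"
proof -
  interpret l: Vector_Spaces.linear s1 s2 f by fact
  show "f (x + y) = f x + f y" "f (s1 c x) = s2 c (f x)" "f 0 = 0" "f (x - y) = f x - f y"
    by (auto simp: l.add l.scale l.diff)
qed

lemma additive_sum_list:
  assumes "\<And>x y. L (x + y) = L x + L y" "L 0 = 0"
  shows "L (sum_list xs) = sum_list (map L xs)"
  using assms by (induction xs) auto

lemma additive_on_sum_list:
  assumes "\<And>x y. x \<in> M \<Longrightarrow> y \<in> M \<Longrightarrow> L (x + y) = L x + L y" "L 0 = 0"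
    "\<And>x y. x \<in> M \<Longrightarrow> y \<in> M \<Longrightarrow> x + y \<in> M" "0 \<in> M" "set xs \<subseteq> M"
  shows "L (sum_list xs) = sum_list (map L xs) \<and> sum_list xs \<in> M"
  using assms(5) by (induction xs) (use assms in auto)

lemma linear_sum_list: "Vector_Spaces.linear s1 s2 f \<Longrightarrow> f (sum_list xs) = sum_list (map f xs)"
  by (rule additive_sum_list) (auto simp: linearD)

lemma subsp_projection_exists:
  assumes vs: "vector_space s" and C: "subsp C s"
  obtains P where "Vector_Spaces.linear s s P" "\<And>x. P x \<in> C" "\<And>x. x \<in> C \<Longrightarrow> P x = x"
proof -
  interpret v: vector_space s by fact
  interpret vp: vector_space_pair s s by unfold_locales
  have sub: "v.subspace C" using C unfolding subsp_def v.subspace_def by auto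
  obtain B where B: "B \<subseteq> C" "v.independent B" "C \<subseteq> v.span B" by (rule v.maximal_independent_subset)
  have lin: "Vector_Spaces.linear s s (vp.construct B id)" by (rule vp.linear_construct[OF B(2)])
  have span: "v.span B = C" using B sub by (simp add: v.span_subspace)
  have "vp.construct B id x \<in> C" for x
    using vp.construct_in_span[OF B(2), of id x] span by simp
  moreover have "vp.construct B id x = x" if "x \<in> C" for x
    using vp.linear_eq_on[OF lin v.linear_id, of x B] that span vp.construct_basis[OF B(2)] by auto
  ultimately show ?thesis using that lin by blast
qed

lemma eq_if_functionals_eq:
  assumes vs: "vector_space (su :: 'k::field \<Rightarrow> 'u::ab_group_add \<Rightarrow> 'u)"
    and eq: "\<And>f. Vector_Spaces.linear su ((*) :: 'k \<Rightarrow> 'k \<Rightarrow> 'k) f \<Longrightarrow> f x = f y"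
  shows "x = y"
proof (rule ccontr)
  interpret v: vector_space su by fact
  interpret vk: vector_space "(*) :: 'k \<Rightarrow> 'k \<Rightarrow> 'k" by (rule vector_space_mult)
  interpret vp: vector_space_pair su "(*) :: 'k \<Rightarrow> 'k \<Rightarrow> 'k" by unfold_locales
  assume "x \<noteq> y"
  then have ind: "v.independent {x - y}" using v.independent_insertI[of "x - y" "{}"] by auto
  define f where "f = vp.construct {x - y} (\<lambda>_. 1)"
  have f: "Vector_Spaces.linear su (*) f" unfolding f_def by (rule vp.linear_construct[OF ind])
  have "f (x - y) = 1" unfolding f_def by (rule vp.construct_basis[OF ind]) simp
  moreover have "f (x - y) = 0" using eq[OF f] linearD(4)[OF f] by simp
  ultimately show False by simp
qed

lemma sum_list_apply: "(sum_list xs) x = sum_list (map (\<lambda>f. f x) xs)"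
  by (induction xs) auto

lemma sum_list_map_swap:
  "sum_list (map (\<lambda>x. sum_list (map (\<lambda>y. g x y) ys)) xs) = sum_list (map (\<lambda>y. sum_list (map (\<lambda>x. g x y) xs)) ys)"
  for g :: "_ \<Rightarrow> _ \<Rightarrow> 'u::comm_monoid_add"
  by (induction xs) (simp_all add: additive_sum_list[of "\<lambda>x. 0"] sum_list_addf)

definition tensor_rep where
  "tensor_rep C D sv sw t = (SOME xs. set xs \<subseteq> C \<times> D \<and> t = sum_list (map (\<lambda>(v, w). tens sv sw v w) xs))"

lemma tlift_tensor_rep:
  "tlift C D sv sw \<beta> t = sum_list (map (\<lambda>x. \<beta> (fst x) (snd x)) (tensor_rep C D sv sw t))"
  by (simp add: tlift_def tensor_rep_def split_def)

lemma tensor_repD: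
  assumes "t \<in> tspace C D sv sw"
  shows "set (tensor_rep C D sv sw t) \<subseteq> C \<times> D"
    and "t = sum_list (map (\<lambda>(v, w). tens sv sw v w) (tensor_rep C D sv sw t))"
proof -
  from assms obtain xs where "set xs \<subseteq> C \<times> D \<and> t = sum_list (map (\<lambda>(v, w). tens sv sw v w) xs)"
    unfolding tspace_def by blast
  then have "set (tensor_rep C D sv sw t) \<subseteq> C \<times> D
      \<and> t = sum_list (map (\<lambda>(v, w). tens sv sw v w) (tensor_rep C D sv sw t))"
    unfolding tensor_rep_def by (rule someI)
  then show "set (tensor_rep C D sv sw t) \<subseteq> C \<times> D"
    and "t = sum_list (map (\<lambda>(v, w). tens sv sw v w) (tensor_rep C D sv sw t))"
    by auto
qed

lemma tlift_add_fun:
  "tlift C D sv sw (\<lambda>v w. \<beta> v w + \<gamma> v w) t = tlift C D sv sw \<beta> t + tlift C D sv sw \<gamma> t"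
  for \<beta> \<gamma> :: "_ \<Rightarrow> _ \<Rightarrow> 'u::comm_monoid_add"
  unfolding tlift_tensor_rep by (simp add: sum_list_addf)

lemma tlift_additive:
  assumes "\<And>x y. L (x + y) = L x + L y" "L 0 = 0"
  shows "L (tlift C D sv sw \<beta> t) = tlift C D sv sw (\<lambda>v w. L (\<beta> v w)) t"
  unfolding tlift_tensor_rep by (simp add: additive_sum_list[OF assms] o_def)

lemma tlift_additive_on:
  assumes "\<And>x y. x \<in> M \<Longrightarrow> y \<in> M \<Longrightarrow> L (x + y) = L x + L y" "L 0 = 0"
    "\<And>x y. x \<in> M \<Longrightarrow> y \<in> M \<Longrightarrow> x + y \<in> M" "0 \<in> M"
    and t: "t \<in> tspace C D sv sw" and b: "\<And>v w. v \<in> C \<Longrightarrow> w \<in> D \<Longrightarrow> \<beta> v w \<in> M"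
  shows "L (tlift C D sv sw \<beta> t) = tlift C D sv sw (\<lambda>v w. L (\<beta> v w)) t"
proof -
  have "set (map (\<lambda>x. \<beta> (fst x) (snd x)) (tensor_rep C D sv sw t)) \<subseteq> M"
    using tensor_repD(1)[OF t] b by auto
  from additive_on_sum_list[OF assms(1-4) this] show ?thesis
    unfolding tlift_tensor_rep by (simp add: o_def)
qed

lemma tlift_in_closed:
  assumes "\<And>x y. x \<in> M \<Longrightarrow> y \<in> M \<Longrightarrow> x + y \<in> M" "0 \<in> M"
    and t: "t \<in> tspace C D sv sw" and b: "\<And>v w. v \<in> C \<Longrightarrow> w \<in> D \<Longrightarrow> \<beta> v w \<in> M"
  shows "tlift C D sv sw \<beta> t \<in> M"
proof -
  have "set (map (\<lambda>x. \<beta> (fst x) (snd x)) (tensor_rep C D sv sw t)) \<subseteq> M"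
    using tensor_repD(1)[OF t] b by auto
  from additive_on_sum_list[of M id, OF _ _ assms(1,2) this] show ?thesis
    unfolding tlift_tensor_rep by simp
qed

lemma tlift_in_subsp:
  assumes M: "subsp M s" and t: "t \<in> tspace C D sv sw" and g: "\<And>a b. a \<in> C \<Longrightarrow> b \<in> D \<Longrightarrow> \<gamma> a b \<in> M"
  shows "tlift C D sv sw \<gamma> t \<in> M"
  by (rule tlift_in_closed[OF subspD(2)[OF M] subspD(1)[OF M] t g])

text \<open>No hypothesis on \<open>t\<close> is needed here: for any \<open>t\<close>, \<^const>\<open>tlift\<close> sums \<open>\<gamma>\<close> over some
  list of pairs.\<close>

lemma tlift_in_subsp_UNIV: "subsp M s \<Longrightarrow> (\<And>a b. \<gamma> a b \<in> M) \<Longrightarrow> tlift UNIV UNIV sv sw \<gamma> t \<in> M"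
  unfolding tlift_tensor_rep
  by (rule conjunct2[OF additive_on_sum_list[where L=id]]) (auto simp: subspD)

lemma tlift_swap:
  "tlift C D sv sw (\<lambda>a b. tlift C' D' sv' sw' (\<lambda>c d. \<gamma> a b c d) t2) t1
   = tlift C' D' sv' sw' (\<lambda>c d. tlift C D sv sw (\<lambda>a b. \<gamma> a b c d) t1) t2"
  for \<gamma> :: "_ \<Rightarrow> _ \<Rightarrow> _ \<Rightarrow> _ \<Rightarrow> 'u::comm_monoid_add"
  unfolding tlift_tensor_rep by (rule sum_list_map_swap)

lemma tlift_cong:
  assumes "t \<in> tspace C D sv sw" "\<And>v w. v \<in> C \<Longrightarrow> w \<in> D \<Longrightarrow> \<beta> v w = \<gamma> v w"
  shows "tlift C D sv sw \<beta> t = tlift C D sv sw \<gamma> t"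
  unfolding tlift_tensor_rep using tensor_repD(1)[OF assms(1)] assms(2)
  by (intro arg_cong[where f=sum_list] map_cong) auto

lemma tlift_fun_cong: "(\<And>a b. \<beta> a b = \<gamma> a b) \<Longrightarrow> tlift C D sv sw \<beta> t = tlift C D sv sw \<gamma> t"
  by (rule arg_cong[where f="\<lambda>f. tlift C D sv sw f t"]) (simp add: fun_eq_iff)

lemma tlift_eta: "t \<in> tspace C D sv sw \<Longrightarrow> tlift C D sv sw (tens sv sw) t = t"
  using tensor_repD(2)[of t C D sv sw] unfolding tlift_tensor_rep by (simp add: split_def)

lemma tlift_lin_pull:
  "lin_on UNIV sx sy f \<Longrightarrow> f (tlift C D sv sw \<beta> t) = tlift C D sv sw (\<lambda>a b. f (\<beta> a b)) t"
  by (rule tlift_additive) (auto simp: lin_onD lin_on_zero)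

lemma tlift_lin_pull_eq:
  "lin_on UNIV sx sy f \<Longrightarrow> (\<And>a b. \<gamma> a b = f (\<beta> a b)) \<Longrightarrow> tlift C D sv sw \<gamma> t = f (tlift C D sv sw \<beta> t)"
  using tlift_lin_pull[of sx sy f C D sv sw \<beta> t] tlift_fun_cong[of \<gamma> "\<lambda>a b. f (\<beta> a b)"] by simp

lemma tlift_scale_fun:
  assumes su: "vector_space su"
  shows "tlift C D sv sw (\<lambda>a b. su c (\<gamma> a b)) t = su c (tlift C D sv sw \<gamma> t)"
  using su by (subst tlift_additive[of "su c"]) (auto simp: vector_spaceD)

lemma lin_on_tlift_fun:
  assumes su: "vector_space su" and t: "t \<in> tspace C D sv sw"
    and F: "\<And>u v. u \<in> C \<Longrightarrow> v \<in> D \<Longrightarrow> lin_on M s1 su (\<lambda>x. F x u v)"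
  shows "lin_on M s1 su (\<lambda>x. tlift C D sv sw (\<lambda>u v. F x u v) t)"
proof (rule lin_onI)
  fix x y assume "x \<in> M" "y \<in> M"
  then show "tlift C D sv sw (\<lambda>u v. F (x + y) u v) t
      = tlift C D sv sw (\<lambda>u v. F x u v) t + tlift C D sv sw (\<lambda>u v. F y u v) t"
    using F by (subst tlift_add_fun[symmetric], intro tlift_cong[OF t]) (auto simp: lin_on_def)
next
  fix c x assume "x \<in> M"
  then show "tlift C D sv sw (\<lambda>u v. F (s1 c x) u v) t = su c (tlift C D sv sw (\<lambda>u v. F x u v) t)"
    using F by (subst tlift_scale_fun[OF su, symmetric], intro tlift_cong[OF t]) (auto simp: lin_on_def)
qed

lemma lin_on_tlift_fun_UNIV:
  assumes su: "vector_space su" and F: "\<And>u v. lin_on M s1 su (\<lambda>x. F x u v)"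
  shows "lin_on M s1 su (\<lambda>x. tlift UNIV UNIV sv sw (\<lambda>u v. F x u v) t)"
proof (rule lin_onI)
  fix x y assume "x \<in> M" "y \<in> M"
  then have "(\<lambda>u v. F (x + y) u v) = (\<lambda>u v. F x u v + F y u v)" using F unfolding lin_on_def by auto
  then show "tlift UNIV UNIV sv sw (\<lambda>u v. F (x + y) u v) t
      = tlift UNIV UNIV sv sw (\<lambda>u v. F x u v) t + tlift UNIV UNIV sv sw (\<lambda>u v. F y u v) t"
    by (simp add: tlift_add_fun)
next
  fix c x assume "x \<in> M"
  then have "(\<lambda>u v. F (s1 c x) u v) = (\<lambda>u v. su c (F x u v))" using F unfolding lin_on_def by auto
  then show "tlift UNIV UNIV sv sw (\<lambda>u v. F (s1 c x) u v) t = su c (tlift UNIV UNIV sv sw (\<lambda>u v. F x u v) t)"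
    by (simp add: tlift_scale_fun[OF su])
qed

lemma tens_apply: "bilin_on UNIV UNIV sv sw (*) \<phi> \<Longrightarrow> tens sv sw v w \<phi> = \<phi> v w"
  by (simp add: tens_def)

lemma tens_bilin_on: "bilin_on C D sv sw tscale (tens sv sw)"
  by (rule bilin_onI) (auto simp: tens_def tscale_def fun_eq_iff bilin_onD algebra_simps)

lemma tens_add_left: "tens sv sw (v + v') w = tens sv sw v w + tens sv sw v' w"
  and tens_add_right: "tens sv sw v (w + w') = tens sv sw v w + tens sv sw v w'"
  and tens_scale_left: "tens sv sw (sv c v) w = tscale c (tens sv sw v w)"
  and tens_scale_right: "tens sv sw v (sw c w) = tscale c (tens sv sw v w)"
  using bilin_onD[OF tens_bilin_on[of UNIV UNIV]] by auto

lemma tens_zero_right: "tens sv sw v 0 = 0"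
  using tens_add_right[of sv sw v 0 0] by simp

lemma tspace_tens: "v \<in> C \<Longrightarrow> w \<in> D \<Longrightarrow> tens sv sw v w \<in> tspace C D sv sw"
  unfolding tspace_def by (rule CollectI, rule exI[of _ "[(v,w)]"]) auto

lemma tspace_zero: "0 \<in> tspace C D sv sw"
  unfolding tspace_def by (rule CollectI, rule exI[of _ "[]"]) auto

lemma tspace_add: "t1 \<in> tspace C D sv sw \<Longrightarrow> t2 \<in> tspace C D sv sw \<Longrightarrow> t1 + t2 \<in> tspace C D sv sw"
  unfolding tspace_def by clarify (metis map_append set_append sum_list_append le_sup_iff)

lemma tspace_scale:
  assumes C: "subsp C sv" and t: "t \<in> tspace C D sv sw"
  shows "tscale c t \<in> tspace C D sv sw"
proof -
  from t obtain xs where xs: "set xs \<subseteq> C \<times> D" "t = sum_list (map (\<lambda>x. tens sv sw (fst x) (snd x)) xs)"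
    unfolding tspace_def by (auto simp: split_def)
  let ?ys = "map (\<lambda>x. (sv c (fst x), snd x)) xs"
  have "tscale c t = sum_list (map (\<lambda>x. tens sv sw (fst x) (snd x)) ?ys)"
    unfolding xs(2) tscale_sum_list by (simp add: o_def tens_scale_left)
  moreover have "set ?ys \<subseteq> C \<times> D"
    using xs(1) C unfolding subsp_def by auto
  ultimately show ?thesis unfolding tspace_def mem_Collect_eq
    by (intro exI[of _ ?ys]) (simp add: split_def)
qed

lemma subsp_tspace:
  assumes "subsp C sv"
  shows "subsp (tspace C D sv sw) tscale"
  unfolding subsp_def using vector_space_tscale tspace_zero tspace_add tspace_scale[OF assms] by blast

section \<open>Well-definedness of \<^const>\<open>tlift\<close>\<close>

lemma sum_tens_apply:
  "bilin_on UNIV UNIV sv sw (*) \<phi> \<Longrightarrow>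
   sum_list (map (\<lambda>x. tens sv sw (fst x) (snd x)) xs) \<phi> = sum_list (map (\<lambda>x. \<phi> (fst x) (snd x)) xs)"
  by (simp add: sum_list_apply o_def tens_apply)

text \<open>Two representations of the same tensor give the same value under a bilinear map \<open>\<beta>\<close>:
  for every functional \<open>f\<close>, the map \<open>f \<circ> \<beta>\<close>, precomposed with projections onto \<open>C\<close> and \<open>D\<close>,
  is a bilinear form on the full spaces, on which the two sums of simple tensors agree.\<close>

lemma sum_bilin_eq_if_sum_tens_eq:
  assumes sv: "vector_space sv" and sw: "vector_space sw" and su: "vector_space su"
    and C: "subsp C sv" and D: "subsp D sw" and bl: "bilin_on C D sv sw su \<beta>"
    and xs: "set xs \<subseteq> C \<times> D" and ys: "set ys \<subseteq> C \<times> D"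
    and eq: "sum_list (map (\<lambda>x. tens sv sw (fst x) (snd x)) xs) = sum_list (map (\<lambda>x. tens sv sw (fst x) (snd x)) ys)"
  shows "sum_list (map (\<lambda>x. \<beta> (fst x) (snd x)) xs) = sum_list (map (\<lambda>x. \<beta> (fst x) (snd x)) ys)"
proof (rule eq_if_functionals_eq[OF su])
  obtain P where P: "Vector_Spaces.linear sv sv P" "\<And>x. P x \<in> C" "\<And>x. x \<in> C \<Longrightarrow> P x = x"
    using subsp_projection_exists[OF sv C] by blast
  obtain Q where Q: "Vector_Spaces.linear sw sw Q" "\<And>x. Q x \<in> D" "\<And>x. x \<in> D \<Longrightarrow> Q x = x"
    using subsp_projection_exists[OF sw D] by blast
  fix f assume f: "Vector_Spaces.linear su (*) f"
  define \<phi> where "\<phi> v w = f (\<beta> (P v) (Q w))" for v w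
  have \<phi>: "bilin_on UNIV UNIV sv sw (*) \<phi>"
    unfolding \<phi>_def
    by (rule bilin_onI) (simp_all add: linearD[OF P(1)] linearD[OF Q(1)] linearD[OF f] P(2) Q(2) bilin_onD[OF bl])
  have ev: "sum_list (map (\<lambda>x. tens sv sw (fst x) (snd x)) zs) \<phi> = f (sum_list (map (\<lambda>x. \<beta> (fst x) (snd x)) zs))"
    if "set zs \<subseteq> C \<times> D" for zs
  proof -
    have "sum_list (map (\<lambda>x. \<phi> (fst x) (snd x)) zs) = sum_list (map (\<lambda>x. f (\<beta> (fst x) (snd x))) zs)"
      using that by (intro arg_cong[where f=sum_list] map_cong) (auto simp: \<phi>_def P(3) Q(3))
    then show ?thesis by (simp add: sum_tens_apply[OF \<phi>] linear_sum_list[OF f] o_def)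
  qed
  show "f (sum_list (map (\<lambda>x. \<beta> (fst x) (snd x)) xs)) = f (sum_list (map (\<lambda>x. \<beta> (fst x) (snd x)) ys))"
    using ev[OF xs] ev[OF ys] eq by simp
qed

lemma tlift_sum_list:
  assumes sv: "vector_space sv" and sw: "vector_space sw" and su: "vector_space su"
    and C: "subsp C sv" and D: "subsp D sw" and bl: "bilin_on C D sv sw su \<beta>"
    and xs: "set xs \<subseteq> C \<times> D"
  shows "tlift C D sv sw \<beta> (sum_list (map (\<lambda>x. tens sv sw (fst x) (snd x)) xs))
       = sum_list (map (\<lambda>x. \<beta> (fst x) (snd x)) xs)"
proof -
  let ?t = "sum_list (map (\<lambda>x. tens sv sw (fst x) (snd x)) xs)"
  have t: "?t \<in> tspace C D sv sw" using xs unfolding tspace_def by (auto simp: split_def)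
  show ?thesis unfolding tlift_tensor_rep
    by (rule sum_bilin_eq_if_sum_tens_eq[OF sv sw su C D bl tensor_repD(1)[OF t] xs])
      (use tensor_repD(2)[OF t] in \<open>simp add: split_def\<close>)
qed

locale tensor_subspaces =
  fixes C :: "'v::ab_group_add set" and D :: "'w::ab_group_add set"
    and sv :: "'k::field \<Rightarrow> 'v \<Rightarrow> 'v" and sw :: "'k \<Rightarrow> 'w \<Rightarrow> 'w"
  assumes C: "subsp C sv" and D: "subsp D sw"
begin

lemma vector_space_sv: "vector_space sv" and vector_space_sw: "vector_space sw"
  using C D subsp_vector_space by auto

lemma tlift_tens:
  assumes su: "vector_space su" and bl: "bilin_on C D sv sw su \<beta>" and v: "v \<in> C" and w: "w \<in> D"
  shows "tlift C D sv sw \<beta> (tens sv sw v w) = \<beta> v w"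
  using tlift_sum_list[OF vector_space_sv vector_space_sw su C D bl, of "[(v,w)]"] v w by simp

lemma tlift_add:
  assumes su: "vector_space su" and bl: "bilin_on C D sv sw su \<beta>"
    and t1: "t1 \<in> tspace C D sv sw" and t2: "t2 \<in> tspace C D sv sw"
  shows "tlift C D sv sw \<beta> (t1 + t2) = tlift C D sv sw \<beta> t1 + tlift C D sv sw \<beta> t2"
proof -
  let ?r1 = "tensor_rep C D sv sw t1" and ?r2 = "tensor_rep C D sv sw t2"
  have "t1 + t2 = sum_list (map (\<lambda>x. tens sv sw (fst x) (snd x)) (?r1 @ ?r2))"
    using tensor_repD(2)[OF t1] tensor_repD(2)[OF t2] by (simp add: split_def)
  moreover have "set (?r1 @ ?r2) \<subseteq> C \<times> D" using tensor_repD(1)[OF t1] tensor_repD(1)[OF t2] by auto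
  ultimately show ?thesis
    using tlift_sum_list[OF vector_space_sv vector_space_sw su C D bl, of "?r1 @ ?r2"]
    by (simp add: tlift_tensor_rep)
qed

lemma tlift_zero:
  assumes su: "vector_space su" and bl: "bilin_on C D sv sw su \<beta>"
  shows "tlift C D sv sw \<beta> 0 = 0"
  using tlift_sum_list[OF vector_space_sv vector_space_sw su C D bl, of "[]"] by simp

lemma tlift_scale:
  assumes su: "vector_space su" and bl: "bilin_on C D sv sw su \<beta>"
    and t: "t \<in> tspace C D sv sw"
  shows "tlift C D sv sw \<beta> (tscale c t) = su c (tlift C D sv sw \<beta> t)"
proof -
  let ?r = "tensor_rep C D sv sw t"
  let ?r' = "map (\<lambda>x. (sv c (fst x), snd x)) ?r"
  have "tscale c t = sum_list (map (\<lambda>x. tens sv sw (fst x) (snd x)) ?r')"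
    by (subst tensor_repD(2)[OF t]) (simp add: split_def tscale_sum_list o_def tens_scale_left)
  moreover have "set ?r' \<subseteq> C \<times> D" using tensor_repD(1)[OF t] C unfolding subsp_def by auto
  ultimately have "tlift C D sv sw \<beta> (tscale c t) = sum_list (map (\<lambda>x. \<beta> (fst x) (snd x)) ?r')"
    using tlift_sum_list[OF vector_space_sv vector_space_sw su C D bl, of "?r'"] by simp
  also have "\<dots> = sum_list (map (\<lambda>x. su c (\<beta> (fst x) (snd x))) ?r)"
  proof -
    have "\<beta> (sv c (fst x)) (snd x) = su c (\<beta> (fst x) (snd x))" if "x \<in> set ?r" for x
      using tensor_repD(1)[OF t] that by (intro bilin_onD(2)[OF bl]) auto
    then show ?thesis by (simp add: o_def cong: map_cong)
  qed
  also have "\<dots> = su c (tlift C D sv sw \<beta> t)"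
    unfolding tlift_tensor_rep using su
    by (subst additive_sum_list[of "su c"]) (auto simp: o_def vector_spaceD)
  finally show ?thesis .
qed

lemma tlift_comp:
  assumes su: "vector_space su" and bl: "bilin_on C D sv sw su \<beta>"
    and t: "t \<in> tspace C' D' sv' sw'" and g: "\<And>a b. a \<in> C' \<Longrightarrow> b \<in> D' \<Longrightarrow> \<gamma> a b \<in> tspace C D sv sw"
  shows "tlift C D sv sw \<beta> (tlift C' D' sv' sw' \<gamma> t) = tlift C' D' sv' sw' (\<lambda>a b. tlift C D sv sw \<beta> (\<gamma> a b)) t"
  by (rule tlift_additive_on[OF tlift_add[OF su bl] tlift_zero[OF su bl] tspace_add tspace_zero t g])

lemma tlift_tspace:
  assumes t: "t \<in> tspace C' D' sv' sw'" and g: "\<And>a b. a \<in> C' \<Longrightarrow> b \<in> D' \<Longrightarrow> \<gamma> a b \<in> tspace C D sv sw"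
  shows "tlift C' D' sv' sw' \<gamma> t \<in> tspace C D sv sw"
  by (rule tlift_in_closed[OF tspace_add tspace_zero t g])

end

lemma tlift_lin_on:
  assumes C: "subsp C sv" and D: "subsp D sw" and su: "vector_space su" and bl: "bilin_on C D sv sw su \<beta>"
  shows "lin_on (tspace C D sv sw) tscale su (\<lambda>t. tlift C D sv sw \<beta> t)"
proof -
  interpret tensor_subspaces C D sv sw using C D by (rule tensor_subspaces.intro)
  show ?thesis using tlift_add[OF su bl] tlift_scale[OF su bl] by (intro lin_onI)
qed

lemma lin_on_tspace_eq_tlift:
  assumes F: "lin_on (tspace C D sv sw) tscale su F" and x: "x \<in> tspace C D sv sw"
  shows "F x = tlift C D sv sw (\<lambda>v w. F (tens sv sw v w)) x"
proof -
  have "F x = F (tlift C D sv sw (tens sv sw) x)" using tlift_eta[OF x] by simp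
  also have "\<dots> = tlift C D sv sw (\<lambda>v w. F (tens sv sw v w)) x"
    by (rule tlift_additive_on[where M="tspace C D sv sw",
          OF lin_onD(1)[OF F] lin_on_zero[OF F tspace_zero] tspace_add tspace_zero x tspace_tens])
  finally show ?thesis .
qed

lemma tspace_lin_eqI:
  assumes F: "lin_on (tspace C D sv sw) tscale su F" and G: "lin_on (tspace C D sv sw) tscale su G"
    and eq: "\<And>v w. v \<in> C \<Longrightarrow> w \<in> D \<Longrightarrow> F (tens sv sw v w) = G (tens sv sw v w)"
    and x: "x \<in> tspace C D sv sw"
  shows "F x = G x"
  unfolding lin_on_tspace_eq_tlift[OF F x] lin_on_tspace_eq_tlift[OF G x] using eq by (rule tlift_cong[OF x])

context
  fixes C :: "'v::ab_group_add set" and D :: "'w::ab_group_add set"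
    and sv :: "'k::field \<Rightarrow> 'v \<Rightarrow> 'v" and sw :: "'k \<Rightarrow> 'w \<Rightarrow> 'w"
    and C' :: "'v2::ab_group_add set" and D' :: "'w2::ab_group_add set"
    and sv' :: "'k::field \<Rightarrow> 'v2 \<Rightarrow> 'v2" and sw' :: "'k \<Rightarrow> 'w2 \<Rightarrow> 'w2"
  assumes C: "subsp C sv" and D: "subsp D sw" and C': "subsp C' sv'" and D': "subsp D' sw'"
begin

interpretation t2: tensor_subspaces C' D' sv' sw' using C' D' by (rule tensor_subspaces.intro)

lemma tmap_tspace:
  assumes f: "\<And>v. v \<in> C \<Longrightarrow> f v \<in> C'" and g: "\<And>w. w \<in> D \<Longrightarrow> g w \<in> D'" and t: "t \<in> tspace C D sv sw"
  shows "tmap C D sv sw sv' sw' f g t \<in> tspace C' D' sv' sw'"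
  unfolding tmap_def by (rule t2.tlift_tspace[OF t]) (intro tspace_tens f g)

lemma tmap_tlift:
  assumes su: "vector_space su" and bl: "bilin_on C' D' sv' sw' su \<beta>"
    and f: "\<And>v. v \<in> C \<Longrightarrow> f v \<in> C'" and g: "\<And>w. w \<in> D \<Longrightarrow> g w \<in> D'" and t: "t \<in> tspace C D sv sw"
  shows "tlift C' D' sv' sw' \<beta> (tmap C D sv sw sv' sw' f g t) = tlift C D sv sw (\<lambda>v w. \<beta> (f v) (g w)) t"
  unfolding tmap_def
  by (subst t2.tlift_comp[OF su bl t], rule tspace_tens[OF f g], assumption+,
      rule tlift_cong[OF t], rule t2.tlift_tens[OF su bl f g])
end

context
  fixes C :: "'v::ab_group_add set" and D :: "'w::ab_group_add set"
    and sv :: "'k::field \<Rightarrow> 'v \<Rightarrow> 'v" and sw :: "'k \<Rightarrow> 'w \<Rightarrow> 'w"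
  assumes C: "subsp C sv" and D: "subsp D sw"
begin

interpretation t1: tensor_subspaces C D sv sw using C D by (rule tensor_subspaces.intro)

lemma tmult_tspace:
  assumes mv: "\<And>a b. a \<in> C \<Longrightarrow> b \<in> C \<Longrightarrow> mv a b \<in> C" and mw: "\<And>a b. a \<in> D \<Longrightarrow> b \<in> D \<Longrightarrow> mw a b \<in> D"
    and x: "x \<in> tspace C D sv sw" and y: "y \<in> tspace C D sv sw"
  shows "tmult C D sv sw mv mw x y \<in> tspace C D sv sw"
  unfolding tmult_def by (intro t1.tlift_tspace[OF x] t1.tlift_tspace[OF y] tspace_tens mv mw)

lemma tmult_tlift:
  assumes su: "vector_space su" and bl: "bilin_on C D sv sw su \<beta>"
    and mv: "\<And>a b. a \<in> C \<Longrightarrow> b \<in> C \<Longrightarrow> mv a b \<in> C" and mw: "\<And>a b. a \<in> D \<Longrightarrow> b \<in> D \<Longrightarrow> mw a b \<in> D"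
    and x: "x \<in> tspace C D sv sw" and y: "y \<in> tspace C D sv sw"
  shows "tlift C D sv sw \<beta> (tmult C D sv sw mv mw x y)
       = tlift C D sv sw (\<lambda>a b. tlift C D sv sw (\<lambda>c d. \<beta> (mv a c) (mw b d)) y) x"
proof -
  have "tlift C D sv sw \<beta> (tmult C D sv sw mv mw x y)
      = tlift C D sv sw (\<lambda>a b. tlift C D sv sw \<beta> (tlift C D sv sw (\<lambda>c d. tens sv sw (mv a c) (mw b d)) y)) x"
    unfolding tmult_def by (rule t1.tlift_comp[OF su bl x]) (intro t1.tlift_tspace[OF y] tspace_tens mv mw)
  also have "\<dots> = tlift C D sv sw (\<lambda>a b. tlift C D sv sw (\<lambda>c d. \<beta> (mv a c) (mw b d)) y) x"
  proof (rule tlift_cong[OF x])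
    fix a b assume ab: "a \<in> C" "b \<in> D"
    have "tlift C D sv sw \<beta> (tlift C D sv sw (\<lambda>c d. tens sv sw (mv a c) (mw b d)) y)
        = tlift C D sv sw (\<lambda>c d. tlift C D sv sw \<beta> (tens sv sw (mv a c) (mw b d))) y"
      using ab by (intro t1.tlift_comp[OF su bl y] tspace_tens mv mw)
    also have "\<dots> = tlift C D sv sw (\<lambda>c d. \<beta> (mv a c) (mw b d)) y"
      using ab by (intro tlift_cong[OF y] t1.tlift_tens[OF su bl] mv mw)
    finally show "tlift C D sv sw \<beta> (tlift C D sv sw (\<lambda>c d. tens sv sw (mv a c) (mw b d)) y)
        = tlift C D sv sw (\<lambda>c d. \<beta> (mv a c) (mw b d)) y" .
  qed
  finally show ?thesis .
qed

end

definition tlift3 where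
  "tlift3 C1 C2 C3 s1 s2 s3 \<beta> X = tlift C1 (tspace C2 C3 s2 s3) s1 tscale (\<lambda>u x. tlift C2 C3 s2 s3 (\<lambda>v w. \<beta> u v w) x) X"

abbreviation tens3 where "tens3 s1 s2 s3 u v w \<equiv> tens s1 tscale u (tens s2 s3 v w)"

lemma tens3_trilin: "trilin_on C1 C2 C3 s1 s2 s3 tscale (tens3 s1 s2 s3)"
proof (rule trilin_onI)
  fix w assume w: "w \<in> C3"
  show "bilin_on C1 C2 s1 s2 tscale (\<lambda>u v. tens s1 tscale u (tens s2 s3 v w))"
    by (rule bilin_onI) (simp_all add: tens_add_left tens_add_right tens_scale_left tens_scale_right)
next
  fix u v
  show "lin_on C3 s3 tscale (\<lambda>w. tens s1 tscale u (tens s2 s3 v w))"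
    by (rule lin_onI) (simp_all add: tens_add_left tens_add_right tens_scale_left tens_scale_right)
qed

context
  fixes C1 :: "'v1::ab_group_add set" and C2 :: "'v2::ab_group_add set" and C3 :: "'v3::ab_group_add set"
    and s1 :: "'k::field \<Rightarrow> 'v1 \<Rightarrow> 'v1" and s2 :: "'k \<Rightarrow> 'v2 \<Rightarrow> 'v2" and s3 :: "'k \<Rightarrow> 'v3 \<Rightarrow> 'v3"
  assumes C1: "subsp C1 s1" and C2: "subsp C2 s2" and C3: "subsp C3 s3"
begin

interpretation t23: tensor_subspaces C2 C3 s2 s3 using C2 C3 by (rule tensor_subspaces.intro)
interpretation t1_23: tensor_subspaces C1 "tspace C2 C3 s2 s3" s1 tscale using C1 subsp_tspace[OF C2] by (rule tensor_subspaces.intro)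

lemma tlift3_kernel_bilin:
  assumes su: "vector_space su" and tri: "trilin_on C1 C2 C3 s1 s2 s3 su \<beta>"
  shows "bilin_on C1 (tspace C2 C3 s2 s3) s1 tscale su (\<lambda>u x. tlift C2 C3 s2 s3 (\<lambda>v w. \<beta> u v w) x)"
proof (rule bilin_on_linI)
  fix x assume x: "x \<in> tspace C2 C3 s2 s3"
  show "lin_on C1 s1 su (\<lambda>u. tlift C2 C3 s2 s3 (\<lambda>v w. \<beta> u v w) x)"
    by (rule lin_on_tlift_fun[OF su x]) (rule bilin_on_linD(1)[OF trilin_on_bilin12[OF tri]], assumption+)
next
  fix u assume u: "u \<in> C1"
  show "lin_on (tspace C2 C3 s2 s3) tscale su (\<lambda>x. tlift C2 C3 s2 s3 (\<lambda>v w. \<beta> u v w) x)"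
    by (rule tlift_lin_on[OF C2 C3 su trilin_on_bilin23[OF tri u]])
qed

lemma tassoc_kernel_bilin:
  assumes su: "vector_space su" and tri: "trilin_on C1 C2 C3 s1 s2 s3 su \<beta>"
  shows "bilin_on (tspace C1 C2 s1 s2) C3 tscale s3 su (\<lambda>x w. tlift C1 C2 s1 s2 (\<lambda>u v. \<beta> u v w) x)"
proof (rule bilin_on_linI)
  fix w assume w: "w \<in> C3"
  show "lin_on (tspace C1 C2 s1 s2) tscale su (\<lambda>x. tlift C1 C2 s1 s2 (\<lambda>u v. \<beta> u v w) x)"
    by (rule tlift_lin_on[OF C1 C2 su trilin_on_bilin12[OF tri w]])
next
  fix x assume x: "x \<in> tspace C1 C2 s1 s2"
  show "lin_on C3 s3 su (\<lambda>w. tlift C1 C2 s1 s2 (\<lambda>u v. \<beta> u v w) x)"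
    by (rule lin_on_tlift_fun[OF su x]) (rule trilin_onD(2)[OF tri], assumption+)
qed

lemma tassoc_tspace:
  assumes t: "t \<in> tspace (tspace C1 C2 s1 s2) C3 tscale s3"
  shows "tassoc C1 C2 C3 s1 s2 s3 t \<in> tspace C1 (tspace C2 C3 s2 s3) s1 tscale"
  unfolding tassoc_def
  by (intro t1_23.tlift_tspace[OF t] t1_23.tlift_tspace tspace_tens; assumption)

lemma tlift3_tassoc:
  assumes su: "vector_space su" and tri: "trilin_on C1 C2 C3 s1 s2 s3 su \<beta>"
    and t: "t \<in> tspace (tspace C1 C2 s1 s2) C3 tscale s3"
  shows "tlift3 C1 C2 C3 s1 s2 s3 \<beta> (tassoc C1 C2 C3 s1 s2 s3 t)
       = tlift (tspace C1 C2 s1 s2) C3 tscale s3 (\<lambda>x w. tlift C1 C2 s1 s2 (\<lambda>u v. \<beta> u v w) x) t"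
proof -
  let ?k = "\<lambda>u x. tlift C2 C3 s2 s3 (\<lambda>v w. \<beta> u v w) x"
  have k: "bilin_on C1 (tspace C2 C3 s2 s3) s1 tscale su ?k" by (rule tlift3_kernel_bilin[OF su tri])
  have "tlift3 C1 C2 C3 s1 s2 s3 \<beta> (tassoc C1 C2 C3 s1 s2 s3 t)
      = tlift (tspace C1 C2 s1 s2) C3 tscale s3 (\<lambda>x w. tlift C1 (tspace C2 C3 s2 s3) s1 tscale ?k
          (tlift C1 C2 s1 s2 (\<lambda>u v. tens3 s1 s2 s3 u v w) x)) t"
    unfolding tassoc_def tlift3_def
    by (rule t1_23.tlift_comp[OF su k t]) (intro t1_23.tlift_tspace tspace_tens; assumption)
  also have "\<dots> = tlift (tspace C1 C2 s1 s2) C3 tscale s3 (\<lambda>x w. tlift C1 C2 s1 s2 (\<lambda>u v. \<beta> u v w) x) t"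
  proof (rule tlift_cong[OF t])
    fix x w assume x: "x \<in> tspace C1 C2 s1 s2" and w: "w \<in> C3"
    have "tlift C1 (tspace C2 C3 s2 s3) s1 tscale ?k (tlift C1 C2 s1 s2 (\<lambda>u v. tens3 s1 s2 s3 u v w) x)
        = tlift C1 C2 s1 s2 (\<lambda>u v. tlift C1 (tspace C2 C3 s2 s3) s1 tscale ?k (tens3 s1 s2 s3 u v w)) x"
      by (rule t1_23.tlift_comp[OF su k x]) (intro tspace_tens w; assumption)
    also have "\<dots> = tlift C1 C2 s1 s2 (\<lambda>u v. \<beta> u v w) x"
      by (rule tlift_cong[OF x])
        (simp add: t1_23.tlift_tens[OF su k] tspace_tens w t23.tlift_tens[OF su trilin_on_bilin23[OF tri]])
    finally show "tlift C1 (tspace C2 C3 s2 s3) s1 tscale ?k (tlift C1 C2 s1 s2 (\<lambda>u v. tens3 s1 s2 s3 u v w) x)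
        = tlift C1 C2 s1 s2 (\<lambda>u v. \<beta> u v w) x" .
  qed
  finally show ?thesis .
qed

lemma tlift3_tens3:
  assumes X: "X \<in> tspace C1 (tspace C2 C3 s2 s3) s1 tscale"
  shows "tlift3 C1 C2 C3 s1 s2 s3 (tens3 s1 s2 s3) X = X"
proof -
  have "tlift3 C1 C2 C3 s1 s2 s3 (tens3 s1 s2 s3) X
      = tlift C1 (tspace C2 C3 s2 s3) s1 tscale (tens s1 tscale) X"
    unfolding tlift3_def
  proof (rule tlift_cong[OF X])
    fix u x assume "x \<in> tspace C2 C3 s2 s3"
    then show "tlift C2 C3 s2 s3 (\<lambda>v w. tens s1 tscale u (tens s2 s3 v w)) x = tens s1 tscale u x"
      by (subst tlift_additive[of "tens s1 tscale u", symmetric])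
         (auto simp: tens_add_right tens_zero_right tlift_eta)
  qed
  also have "\<dots> = X" by (rule tlift_eta[OF X])
  finally show ?thesis .
qed

end

context
  fixes C1 :: "'v1::ab_group_add set" and C2 :: "'v2::ab_group_add set" and C3 :: "'v3::ab_group_add set"
    and s1 :: "'k::field \<Rightarrow> 'v1 \<Rightarrow> 'v1" and s2 :: "'k \<Rightarrow> 'v2 \<Rightarrow> 'v2" and s3 :: "'k \<Rightarrow> 'v3 \<Rightarrow> 'v3"
    and P :: "'p::ab_group_add set" and sp :: "'k \<Rightarrow> 'p \<Rightarrow> 'p"
  assumes C1: "subsp C1 s1" and C2: "subsp C2 s2" and C3: "subsp C3 s3" and P: "subsp P sp"
begin

lemma tlift3_tassoc_tmap:
  assumes su: "vector_space su" and tri: "trilin_on C1 C2 C3 s1 s2 s3 su \<beta>"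
    and t: "t \<in> tspace P C3 sp s3" and f: "\<And>p. p \<in> P \<Longrightarrow> f p \<in> tspace C1 C2 s1 s2"
  shows "tlift3 C1 C2 C3 s1 s2 s3 \<beta> (tassoc C1 C2 C3 s1 s2 s3 (tmap P C3 sp s3 tscale s3 f id t))
       = tlift P C3 sp s3 (\<lambda>p w. tlift C1 C2 s1 s2 (\<lambda>u v. \<beta> u v w) (f p)) t"
proof -
  have "tmap P C3 sp s3 tscale s3 f id t \<in> tspace (tspace C1 C2 s1 s2) C3 tscale s3"
    by (rule tmap_tspace[OF P C3 subsp_tspace[OF C1] C3 f _ t]) auto
  then show ?thesis
    by (simp add: tlift3_tassoc[OF C1 C2 C3 su tri]
        tmap_tlift[OF P C3 subsp_tspace[OF C1] C3 su tassoc_kernel_bilin[OF C1 C2 C3 su tri] f _ t])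
qed

lemma tlift3_tmap:
  assumes su: "vector_space su" and tri: "trilin_on C1 C2 C3 s1 s2 s3 su \<beta>"
    and t: "t \<in> tspace C1 P s1 sp" and g: "\<And>p. p \<in> P \<Longrightarrow> g p \<in> tspace C2 C3 s2 s3"
  shows "tlift3 C1 C2 C3 s1 s2 s3 \<beta> (tmap C1 P s1 sp s1 tscale id g t)
       = tlift C1 P s1 sp (\<lambda>u p. tlift C2 C3 s2 s3 (\<lambda>v w. \<beta> u v w) (g p)) t"
  unfolding tlift3_def
  by (subst tmap_tlift[OF C1 P C1 subsp_tspace[OF C2] su tlift3_kernel_bilin[OF C1 C2 C3 su tri] _ g t]) simp_all

end

text \<open>Coassociativity-type identities in \<open>C\<^sub>1 \<otimes> (C\<^sub>2 \<otimes> C\<^sub>3)\<close> only need to be checked after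
  evaluating both sides on the trilinear map \<open>tens3\<close>, on which \<^const>\<open>tlift3\<close> is the identity.\<close>

lemma tassoc_tmap_eqI:
  assumes C1: "subsp C1 s1" and C2: "subsp C2 s2" and C3: "subsp C3 s3"
    and f: "\<And>p. p \<in> C1 \<Longrightarrow> f p \<in> tspace C1 C2 s1 s2" and g: "\<And>p. p \<in> C3 \<Longrightarrow> g p \<in> tspace C2 C3 s2 s3"
    and t: "t \<in> tspace C1 C3 s1 s3"
    and eq: "tlift C1 C3 s1 s3 (\<lambda>p w. tlift C1 C2 s1 s2 (\<lambda>u v. tens3 s1 s2 s3 u v w) (f p)) t
           = tlift C1 C3 s1 s3 (\<lambda>u p. tlift C2 C3 s2 s3 (\<lambda>v w. tens3 s1 s2 s3 u v w) (g p)) t"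
  shows "tassoc C1 C2 C3 s1 s2 s3 (tmap C1 C3 s1 s3 tscale s3 f id t) = tmap C1 C3 s1 s3 s1 tscale id g t"
proof -
  have inL: "tassoc C1 C2 C3 s1 s2 s3 (tmap C1 C3 s1 s3 tscale s3 f id t) \<in> tspace C1 (tspace C2 C3 s2 s3) s1 tscale"
    by (rule tassoc_tspace[OF C1 C2 C3 tmap_tspace[OF C1 C3 subsp_tspace[OF C1] C3 f _ t]]) auto
  have inR: "tmap C1 C3 s1 s3 s1 tscale id g t \<in> tspace C1 (tspace C2 C3 s2 s3) s1 tscale"
    by (rule tmap_tspace[OF C1 C3 C1 subsp_tspace[OF C2] _ g t]) auto
  have "tlift3 C1 C2 C3 s1 s2 s3 (tens3 s1 s2 s3) (tassoc C1 C2 C3 s1 s2 s3 (tmap C1 C3 s1 s3 tscale s3 f id t))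
      = tlift3 C1 C2 C3 s1 s2 s3 (tens3 s1 s2 s3) (tmap C1 C3 s1 s3 s1 tscale id g t)"
    using eq by (simp add: tlift3_tassoc_tmap[OF C1 C2 C3 C1 vector_space_tscale tens3_trilin t f]
        tlift3_tmap[OF C1 C2 C3 C3 vector_space_tscale tens3_trilin t g])
  then show ?thesis by (simp only: tlift3_tens3[OF C1 C2 C3 inL] tlift3_tens3[OF C1 C2 C3 inR])
qed

named_theorems lin_intros

lemma lin_id[lin_intros]: "lin_on M s s (\<lambda>x. x)" by (rule lin_onI) auto

lemma lin_tens_left[lin_intros]: "lin_on M s1 sv f \<Longrightarrow> lin_on M s1 tscale (\<lambda>x. tens sv sw (f x) w)"
  by (rule lin_onI) (auto simp: lin_onD tens_add_left tens_scale_left)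
lemma lin_tens_right[lin_intros]: "lin_on M s1 sw f \<Longrightarrow> lin_on M s1 tscale (\<lambda>x. tens sv sw v (f x))"
  by (rule lin_onI) (auto simp: lin_onD tens_add_right tens_scale_right)
lemma lin_scale_const[lin_intros]: "vector_space s2 \<Longrightarrow> lin_on M s1 s2 f \<Longrightarrow> lin_on M s1 s2 (\<lambda>x. s2 c (f x))"
  by (rule lin_onI) (auto simp: lin_onD vector_spaceD mult.commute)
lemma lin_scale_scalar[lin_intros]: "vector_space s2 \<Longrightarrow> lin_on M s1 (*) f \<Longrightarrow> lin_on M s1 s2 (\<lambda>x. s2 (f x) v)"
  by (rule lin_onI) (auto simp: lin_onD vector_spaceD)
lemma lin_mult_const_right[lin_intros]: "lin_on M s1 (*) f \<Longrightarrow> lin_on M s1 (*) (\<lambda>x. f x * (c::'k::field))"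
  by (rule lin_onI) (auto simp: lin_onD algebra_simps)
lemma lin_mult_const_left[lin_intros]: "lin_on M s1 (*) f \<Longrightarrow> lin_on M s1 (*) (\<lambda>x. (c::'k::field) * f x)"
  by (rule lin_onI) (auto simp: lin_onD algebra_simps)
lemma lin_tlift_fun[lin_intros]: "vector_space su \<Longrightarrow> (\<And>u v. lin_on M s1 su (\<lambda>x. F x u v))
  \<Longrightarrow> lin_on M s1 su (\<lambda>x. tlift UNIV UNIV sv sw (\<lambda>u v. F x u v) t)"
  by (rule lin_on_tlift_fun_UNIV)

lemma bilin_UNIV_I[lin_intros]: "(\<And>w. lin_on UNIV s1 s3 (\<lambda>v. \<beta> v w)) \<Longrightarrow> (\<And>v. lin_on UNIV s2 s3 (\<lambda>w. \<beta> v w))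
  \<Longrightarrow> bilin_on UNIV UNIV s1 s2 s3 \<beta>"
  by (rule bilin_on_linI) auto
lemma trilin_UNIV_I[lin_intros]: "(\<And>w. bilin_on UNIV UNIV s1 s2 su (\<lambda>u v. \<beta> u v w)) \<Longrightarrow> (\<And>u v. lin_on UNIV s3 su (\<lambda>w. \<beta> u v w))
  \<Longrightarrow> trilin_on UNIV UNIV UNIV s1 s2 s3 su \<beta>"
  by (rule trilin_onI) auto

locale lr_twisting_hopf =
  fixes sh :: "'k::field \<Rightarrow> 'h::ring_1 \<Rightarrow> 'h"
    and sa :: "'k \<Rightarrow> 'a::ring_1 \<Rightarrow> 'a"
    and \<Delta> :: "'h \<Rightarrow> ('h, 'h, 'k) tensor" and \<epsilon> :: "'h \<Rightarrow> 'k" and S :: "'h \<Rightarrow> 'h"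
    and lact :: "'h \<Rightarrow> 'a \<Rightarrow> 'a" and ract :: "'a \<Rightarrow> 'h \<Rightarrow> 'a"
    and psil :: "'a \<Rightarrow> ('h, 'a, 'k) tensor" and psir :: "'a \<Rightarrow> ('a, 'h, 'k) tensor"
  assumes A: "alg UNIV sa (*) 1"
    and H: "hopf UNIV sh (*) 1 \<Delta> \<epsilon> S"
    and Sbij: "bij S"
    and D: "lr_datum sh \<Delta> \<epsilon> sa lact ract psil psir"
begin

abbreviation tlift_HH where "tlift_HH \<equiv> tlift UNIV UNIV sh sh"
abbreviation sweedler where "sweedler h \<beta> \<equiv> tlift_HH \<beta> (\<Delta> h)"
abbreviation tlift_HA where "tlift_HA \<equiv> tlift UNIV UNIV sh sa"
abbreviation tlift_AH where "tlift_AH \<equiv> tlift UNIV UNIV sa sh"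
abbreviation Sinv where "Sinv \<equiv> inv S"

abbreviation K where "K \<equiv> tspace UNIV UNIV sh sh"
abbreviation tlift_KK where "tlift_KK \<equiv> tlift K K tscale tscale"
abbreviation tlift_KA where "tlift_KA \<equiv> tlift K UNIV tscale sa"
abbreviation mK where "mK \<equiv> hhop_mult sh"
abbreviation uK where "uK \<equiv> hhop_unit sh"
abbreviation \<Delta>K where "\<Delta>K \<equiv> hhop_comult sh \<Delta>"
abbreviation \<epsilon>K where "\<epsilon>K \<equiv> hhop_counit sh \<epsilon>"
abbreviation mKK where "mKK \<equiv> tmult K K tscale tscale mK mK"
abbreviation mKA where "mKA \<equiv> tmult K UNIV tscale sa mK (*)"

abbreviation \<pi> where "\<pi> \<equiv> pi_act sh lact ract"
abbreviation \<psi> where "\<psi> \<equiv> psi_coact sh sa S psil psir"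
abbreviation \<Lambda> where "\<Lambda> \<equiv> lam sa sh S ract psir"
abbreviation \<Lambda>inv where "\<Lambda>inv \<equiv> lam_inv sa sh ract psir"

lemma bialg_H: "bialg UNIV sh (*) 1 \<Delta> \<epsilon>" using H unfolding hopf_def by auto
lemma alg_H: "alg UNIV sh (*) 1" using bialg_H unfolding bialg_def by auto
lemma coalg_H: "coalg UNIV sh \<Delta> \<epsilon>" using bialg_H unfolding bialg_def by auto
lemma vs_H: "vector_space sh" using alg_H unfolding alg_def subsp_def by auto
lemma vs_A: "vector_space sa" using A unfolding alg_def subsp_def by auto
lemma subsp_H: "subsp UNIV sh" using vs_H by (rule subsp_UNIV)
lemma subsp_A: "subsp UNIV sa" using vs_A by (rule subsp_UNIV)

lemma bilin_multH: "bilin_on UNIV UNIV sh sh sh (*)" using alg_H unfolding alg_def by auto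
lemma bilin_multA: "bilin_on UNIV UNIV sa sa sa (*)" using A unfolding alg_def by auto

lemma multH_scale_left: "sh c x * y = sh c (x * y)" and multH_scale_right: "x * sh c y = sh c (x * y)"
  using bilin_onD[OF bilin_multH] by auto
lemma multA_scale_left: "sa c x * y = sa c (x * y)" and multA_scale_right: "x * sa c y = sa c (x * y)"
  using bilin_onD[OF bilin_multA] by auto

lemma Delta_tspace: "\<Delta> x \<in> tspace UNIV UNIV sh sh" using coalg_H unfolding coalg_def by auto
lemma Delta_lin: "lin_on UNIV sh tscale \<Delta>" using coalg_H unfolding coalg_def by auto
lemma eps_lin: "lin_on UNIV sh (*) \<epsilon>" using coalg_H unfolding coalg_def by auto
lemma Delta_coassoc: "tassoc UNIV UNIV UNIV sh sh sh (tmap UNIV UNIV sh sh tscale sh \<Delta> id (\<Delta> x))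
                = tmap UNIV UNIV sh sh sh tscale id \<Delta> (\<Delta> x)" using coalg_H unfolding coalg_def by auto
lemma Delta_counit: "sweedler x (\<lambda>a b. sh (\<epsilon> a) b) = x"
   "sweedler x (\<lambda>a b. sh (\<epsilon> b) a) = x" using coalg_H unfolding coalg_def by auto
lemma Delta_mult: "\<Delta> (x * y) = tmult UNIV UNIV sh sh (*) (*) (\<Delta> x) (\<Delta> y)"
  and Delta_one: "\<Delta> 1 = tens sh sh 1 1" and eps_mult: "\<epsilon> (x * y) = \<epsilon> x * \<epsilon> y" and eps_one: "\<epsilon> 1 = 1"
  using bialg_H unfolding bialg_def by auto
lemma S_lin: "lin_on UNIV sh sh S" using H unfolding hopf_def by auto
lemma antipode: "sweedler x (\<lambda>a b. S a * b) = sh (\<epsilon> x) 1"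
   "sweedler x (\<lambda>a b. a * S b) = sh (\<epsilon> x) 1"
  using H unfolding hopf_def by auto

lemma lmod_alg_lact: "lmod_alg UNIV sh (*) 1 \<Delta> \<epsilon> UNIV sa (*) 1 lact" using D unfolding lr_datum_def by auto
lemma rmod_alg_ract: "rmod_alg UNIV sh (*) 1 \<Delta> \<epsilon> UNIV sa (*) 1 ract" using D unfolding lr_datum_def by auto
lemma lact_ract_commute: "ract (lact h a) g = lact h (ract a g)" using D unfolding lr_datum_def by auto
lemma lcomod_alg_psil: "lcomod_alg UNIV sh (*) 1 \<Delta> \<epsilon> UNIV sa (*) 1 psil" using D unfolding lr_datum_def by auto
lemma rcomod_alg_psir: "rcomod_alg UNIV sh (*) 1 \<Delta> \<epsilon> UNIV sa (*) 1 psir" using D unfolding lr_datum_def by auto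
lemma psil_psir_bicomod: "tassoc UNIV UNIV UNIV sh sa sh (tmap UNIV UNIV sa sh tscale sh psil id (psir a))
             = tmap UNIV UNIV sh sa sh tscale id psir (psil a)" using D unfolding lr_datum_def by auto
lemma psil_lact: "psil (lact h a) = tmap UNIV UNIV sh sa sh sa id (lact h) (psil a)"
  and psir_lact: "psir (lact h a) = tmap UNIV UNIV sa sh sa sh (lact h) id (psir a)"
  and psil_ract: "psil (ract a h) = tmap UNIV UNIV sh sa sh sa id (\<lambda>b. ract b h) (psil a)"
  and psir_ract: "psir (ract a h) = tmap UNIV UNIV sa sh sa sh (\<lambda>b. ract b h) id (psir a)"
  using D unfolding lr_datum_def by auto

lemma lact_bilin: "bilin_on UNIV UNIV sh sa sa lact" using lmod_alg_lact unfolding lmod_alg_def by auto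
lemma lact_mult: "lact (x * y) a = lact x (lact y a)" and lact_one: "lact 1 a = a"
  and lact_distrib_times: "lact x (a * b) = sweedler x (\<lambda>x1 x2. lact x1 a * lact x2 b)"
  and lact_unit: "lact x 1 = sa (\<epsilon> x) 1"
  using lmod_alg_lact unfolding lmod_alg_def by auto
lemma ract_bilin: "bilin_on UNIV UNIV sa sh sa ract" using rmod_alg_ract unfolding rmod_alg_def by auto
lemma ract_mult: "ract a (x * y) = ract (ract a x) y" and ract_one: "ract a 1 = a"
  and ract_distrib_times: "ract (a * b) x = sweedler x (\<lambda>x1 x2. ract a x1 * ract b x2)"
  and ract_unit: "ract 1 x = sa (\<epsilon> x) 1"
  using rmod_alg_ract unfolding rmod_alg_def by auto

lemma psil_tspace: "psil a \<in> tspace UNIV UNIV sh sa" and psil_lin: "lin_on UNIV sa tscale psil"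
  and psil_coassoc: "tassoc UNIV UNIV UNIV sh sh sa (tmap UNIV UNIV sh sa tscale sa \<Delta> id (psil a))
                = tmap UNIV UNIV sh sa sh tscale id psil (psil a)"
  and psil_counit: "tlift_HA (\<lambda>x b. sa (\<epsilon> x) b) (psil a) = a"
  and psil_mult: "psil (a * b) = tmult UNIV UNIV sh sa (*) (*) (psil a) (psil b)"
  and psil_one: "psil 1 = tens sh sa 1 1"
  using lcomod_alg_psil unfolding lcomod_alg_def by auto

lemma psir_tspace: "psir a \<in> tspace UNIV UNIV sa sh" and psir_lin: "lin_on UNIV sa tscale psir"
  and psir_coassoc: "tassoc UNIV UNIV UNIV sa sh sh (tmap UNIV UNIV sa sh tscale sh psir id (psir a))
                = tmap UNIV UNIV sa sh sa tscale id \<Delta> (psir a)"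
  and psir_counit: "tlift_AH (\<lambda>b x. sa (\<epsilon> x) b) (psir a) = a"
  and psir_mult: "psir (a * b) = tmult UNIV UNIV sa sh (*) (*) (psir a) (psir b)"
  and psir_one: "psir 1 = tens sa sh 1 1"
  using rcomod_alg_psir unfolding rcomod_alg_def by auto

lemmas [lin_intros] = vs_H vs_A vector_space_mult vector_space_tscale subsp_H subsp_A

lemma lin_multH_const_right[lin_intros]: "lin_on M s1 sh f \<Longrightarrow> lin_on M s1 sh (\<lambda>x. f x * c)"
  by (rule lin_onI) (auto simp: lin_onD algebra_simps multH_scale_left)
lemma lin_multH_const_left[lin_intros]: "lin_on M s1 sh f \<Longrightarrow> lin_on M s1 sh (\<lambda>x. c * f x)"
  by (rule lin_onI) (auto simp: lin_onD algebra_simps multH_scale_right)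
lemma lin_multA_const_right[lin_intros]: "lin_on M s1 sa f \<Longrightarrow> lin_on M s1 sa (\<lambda>x. f x * c)"
  by (rule lin_onI) (auto simp: lin_onD algebra_simps multA_scale_left)
lemma lin_multA_const_left[lin_intros]: "lin_on M s1 sa f \<Longrightarrow> lin_on M s1 sa (\<lambda>x. c * f x)"
  by (rule lin_onI) (auto simp: lin_onD algebra_simps multA_scale_right)
lemma lin_S[lin_intros]: "lin_on M s1 sh f \<Longrightarrow> lin_on M s1 sh (\<lambda>x. S (f x))"
  using S_lin by (intro lin_onI) (auto simp: lin_onD)
lemma lin_eps[lin_intros]: "lin_on M s1 sh f \<Longrightarrow> lin_on M s1 (*) (\<lambda>x. \<epsilon> (f x))"
  using eps_lin by (intro lin_onI) (auto simp: lin_onD)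
lemma lin_lact_H[lin_intros]: "lin_on M s1 sh f \<Longrightarrow> lin_on M s1 sa (\<lambda>x. lact (f x) a)"
  by (rule lin_onI) (auto simp: lin_onD bilin_onD[OF lact_bilin])
lemma lin_lact_A[lin_intros]: "lin_on M s1 sa f \<Longrightarrow> lin_on M s1 sa (\<lambda>x. lact h (f x))"
  by (rule lin_onI) (auto simp: lin_onD bilin_onD[OF lact_bilin])
lemma lin_ract_A[lin_intros]: "lin_on M s1 sa f \<Longrightarrow> lin_on M s1 sa (\<lambda>x. ract (f x) h)"
  by (rule lin_onI) (auto simp: lin_onD bilin_onD[OF ract_bilin])
lemma lin_ract_H[lin_intros]: "lin_on M s1 sh f \<Longrightarrow> lin_on M s1 sa (\<lambda>x. ract a (f x))"
  by (rule lin_onI) (auto simp: lin_onD bilin_onD[OF ract_bilin])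

lemma ract_scale_H: "ract a (sh c h) = sa c (ract a h)" using bilin_onD(4)[OF ract_bilin] by simp
lemma ract_scale_A: "ract (sa c a) h = sa c (ract a h)" using bilin_onD(2)[OF ract_bilin] by simp

sublocale tHH: tensor_subspaces UNIV UNIV sh sh by (intro tensor_subspaces.intro subsp_H subsp_A)
sublocale tHA: tensor_subspaces UNIV UNIV sh sa by (intro tensor_subspaces.intro subsp_H subsp_A)
sublocale tAH: tensor_subspaces UNIV UNIV sa sh by (intro tensor_subspaces.intro subsp_H subsp_A)

lemma lin_tlift_Delta[lin_intros]: "vector_space su \<Longrightarrow> bilin_on UNIV UNIV sh sh su \<beta> \<Longrightarrow> lin_on M s1 sh f
  \<Longrightarrow> lin_on M s1 su (\<lambda>x. sweedler ((f x)) \<beta>)"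
  by (rule lin_onI) (auto simp: lin_onD[OF Delta_lin] lin_onD tHH.tlift_add tHH.tlift_scale Delta_tspace)
lemma lin_tlift_psil[lin_intros]: "vector_space su \<Longrightarrow> bilin_on UNIV UNIV sh sa su \<beta> \<Longrightarrow> lin_on M s1 sa f
  \<Longrightarrow> lin_on M s1 su (\<lambda>x. tlift_HA \<beta> (psil (f x)))"
  by (rule lin_onI) (auto simp: lin_onD[OF psil_lin] lin_onD tHA.tlift_add tHA.tlift_scale psil_tspace)
lemma lin_tlift_psir[lin_intros]: "vector_space su \<Longrightarrow> bilin_on UNIV UNIV sa sh su \<beta> \<Longrightarrow> lin_on M s1 sa f
  \<Longrightarrow> lin_on M s1 su (\<lambda>x. tlift_AH \<beta> (psir (f x)))"
  by (rule lin_onI) (auto simp: lin_onD[OF psir_lin] lin_onD tHA.tlift_add tAH.tlift_scale tAH.tlift_add psir_tspace)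

lemma sweedler_coassoc:
  assumes su: "vector_space su" and tri: "trilin_on UNIV UNIV UNIV sh sh sh su \<beta>"
  shows "sweedler h (\<lambda>x y. sweedler x (\<lambda>u v. \<beta> u v y))
       = sweedler h (\<lambda>x y. sweedler y (\<lambda>u v. \<beta> x u v))"
  using arg_cong[OF Delta_coassoc[of h], of "tlift3 UNIV UNIV UNIV sh sh sh \<beta>"]
  by (simp add: tlift3_tassoc_tmap[OF subsp_H subsp_H subsp_H subsp_H su tri Delta_tspace Delta_tspace]
        tlift3_tmap[OF subsp_H subsp_H subsp_H subsp_H su tri Delta_tspace Delta_tspace])

lemma tlift_psil_coassoc:
  assumes su: "vector_space su" and tri: "trilin_on UNIV UNIV UNIV sh sh sa su \<beta>"
  shows "tlift_HA (\<lambda>x b. sweedler x (\<lambda>u v. \<beta> u v b)) (psil a)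
       = tlift_HA (\<lambda>x b. tlift_HA (\<lambda>u c. \<beta> x u c) (psil b)) (psil a)"
  using arg_cong[OF psil_coassoc[of a], of "tlift3 UNIV UNIV UNIV sh sh sa \<beta>"]
  by (simp add: tlift3_tassoc_tmap[OF subsp_H subsp_H subsp_A subsp_H su tri psil_tspace Delta_tspace]
        tlift3_tmap[OF subsp_H subsp_H subsp_A subsp_A su tri psil_tspace psil_tspace])

lemma tlift_psir_coassoc:
  assumes su: "vector_space su" and tri: "trilin_on UNIV UNIV UNIV sa sh sh su \<beta>"
  shows "tlift_AH (\<lambda>b x. tlift_AH (\<lambda>c u. \<beta> c u x) (psir b)) (psir a)
       = tlift_AH (\<lambda>b x. sweedler x (\<lambda>u v. \<beta> b u v)) (psir a)"
  using arg_cong[OF psir_coassoc[of a], of "tlift3 UNIV UNIV UNIV sa sh sh \<beta>"]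
  by (simp add: tlift3_tassoc_tmap[OF subsp_A subsp_H subsp_H subsp_A su tri psir_tspace psir_tspace]
        tlift3_tmap[OF subsp_A subsp_H subsp_H subsp_H su tri psir_tspace Delta_tspace])

lemma tlift_psil_psir_bicomod:
  assumes su: "vector_space su" and tri: "trilin_on UNIV UNIV UNIV sh sa sh su \<beta>"
  shows "tlift_AH (\<lambda>b x. tlift_HA (\<lambda>u c. \<beta> u c x) (psil b)) (psir a)
       = tlift_HA (\<lambda>u b. tlift_AH (\<lambda>c x. \<beta> u c x) (psir b)) (psil a)"
  using arg_cong[OF psil_psir_bicomod[of a], of "tlift3 UNIV UNIV UNIV sh sa sh \<beta>"]
  by (simp add: tlift3_tassoc_tmap[OF subsp_H subsp_A subsp_H subsp_A su tri psir_tspace psil_tspace]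
        tlift3_tmap[OF subsp_H subsp_A subsp_H subsp_A su tri psil_tspace psir_tspace])

lemma sweedler_counit_right:
  assumes "lin_on UNIV sh su f"
  shows "sweedler h (\<lambda>x y. f (sh (\<epsilon> y) x)) = f h"
  using tlift_lin_pull[OF assms, of UNIV UNIV sh sh "\<lambda>a b. sh (\<epsilon> b) a" "\<Delta> h"] Delta_counit(2)[of h] by simp

lemma sweedler_counit_left:
  assumes "lin_on UNIV sh su f"
  shows "sweedler h (\<lambda>x y. f (sh (\<epsilon> x) y)) = f h"
  using tlift_lin_pull[OF assms, of UNIV UNIV sh sh "\<lambda>a b. sh (\<epsilon> a) b" "\<Delta> h"] Delta_counit(1)[of h] by simp

lemma sweedler_mult:
  assumes su: "vector_space su" and bl: "bilin_on UNIV UNIV sh sh su \<beta>"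
  shows "sweedler ((x * y)) \<beta> = sweedler x (\<lambda>a b. sweedler y (\<lambda>c d. \<beta> (a * c) (b * d)))"
  unfolding Delta_mult by (rule tmult_tlift[OF subsp_H subsp_H su bl _ _ Delta_tspace Delta_tspace]) auto

lemma sweedler_one:
  assumes su: "vector_space su" and bl: "bilin_on UNIV UNIV sh sh su \<beta>"
  shows "sweedler 1 \<beta> = \<beta> 1 1"
  unfolding Delta_one by (rule tHH.tlift_tens[OF su bl]) auto

lemma tlift_psil_mult:
  assumes su: "vector_space su" and bl: "bilin_on UNIV UNIV sh sa su \<beta>"
  shows "tlift_HA \<beta> (psil (a * b)) = tlift_HA (\<lambda>x a1. tlift_HA (\<lambda>y b1. \<beta> (x * y) (a1 * b1)) (psil b)) (psil a)"
  unfolding psil_mult by (rule tmult_tlift[OF subsp_H subsp_A su bl _ _ psil_tspace psil_tspace]) auto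

lemma tlift_psir_mult:
  assumes su: "vector_space su" and bl: "bilin_on UNIV UNIV sa sh su \<beta>"
  shows "tlift_AH \<beta> (psir (a * b)) = tlift_AH (\<lambda>a1 x. tlift_AH (\<lambda>b1 y. \<beta> (a1 * b1) (x * y)) (psir b)) (psir a)"
  unfolding psir_mult by (rule tmult_tlift[OF subsp_A subsp_H su bl _ _ psir_tspace psir_tspace]) auto

lemma tlift_psil_one:
  assumes su: "vector_space su" and bl: "bilin_on UNIV UNIV sh sa su \<beta>"
  shows "tlift_HA \<beta> (psil 1) = \<beta> 1 1"
  unfolding psil_one by (rule tHA.tlift_tens[OF su bl]) auto

lemma tlift_psir_one:
  assumes su: "vector_space su" and bl: "bilin_on UNIV UNIV sa sh su \<beta>"
  shows "tlift_AH \<beta> (psir 1) = \<beta> 1 1"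
  unfolding psir_one by (rule tAH.tlift_tens[OF su bl]) auto

lemma tlift_psil_lact:
  assumes su: "vector_space su" and bl: "bilin_on UNIV UNIV sh sa su \<beta>"
  shows "tlift_HA \<beta> (psil (lact h a)) = tlift_HA (\<lambda>x b. \<beta> x (lact h b)) (psil a)"
  unfolding psil_lact by (subst tmap_tlift[OF subsp_H subsp_A subsp_H subsp_A su bl _ _ psil_tspace]) auto
lemma tlift_psir_lact:
  assumes su: "vector_space su" and bl: "bilin_on UNIV UNIV sa sh su \<beta>"
  shows "tlift_AH \<beta> (psir (lact h a)) = tlift_AH (\<lambda>b x. \<beta> (lact h b) x) (psir a)"
  unfolding psir_lact by (subst tmap_tlift[OF subsp_A subsp_H subsp_A subsp_H su bl _ _ psir_tspace]) auto
lemma tlift_psil_ract: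
  assumes su: "vector_space su" and bl: "bilin_on UNIV UNIV sh sa su \<beta>"
  shows "tlift_HA \<beta> (psil (ract a h)) = tlift_HA (\<lambda>x b. \<beta> x (ract b h)) (psil a)"
  unfolding psil_ract by (subst tmap_tlift[OF subsp_H subsp_A subsp_H subsp_A su bl _ _ psil_tspace]) auto
lemma tlift_psir_ract:
  assumes su: "vector_space su" and bl: "bilin_on UNIV UNIV sa sh su \<beta>"
  shows "tlift_AH \<beta> (psir (ract a h)) = tlift_AH (\<lambda>b x. \<beta> (ract b h) x) (psir a)"
  unfolding psir_ract by (subst tmap_tlift[OF subsp_A subsp_H subsp_A subsp_H su bl _ _ psir_tspace]) auto

section \<open>The antipode and its inverse\<close>

lemma antipode_one: "S 1 = 1"
proof -
  have "sweedler 1 (\<lambda>a b. S a * b) = S 1 * 1"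
    by (rule sweedler_one[OF vs_H]) (intro lin_intros)
  then show ?thesis using antipode(1)[of 1] by (simp add: eps_one vector_spaceD[OF vs_H])
qed

lemma counit_antipode: "\<epsilon> (S h) = \<epsilon> h"
proof -
  have "\<epsilon> h = \<epsilon> (sweedler h (\<lambda>a b. S a * b))"
    using antipode(1)[of h] lin_onD(2)[OF eps_lin, of 1 "\<epsilon> h"] by (simp add: eps_one)
  also have "\<dots> = sweedler h (\<lambda>a b. \<epsilon> (S (sh (\<epsilon> b) a)))"
    by (rule tlift_lin_pull_eq[symmetric, OF eps_lin]) (simp add: eps_mult lin_onD[OF S_lin] lin_onD[OF eps_lin] mult.commute)
  also have "\<dots> = \<epsilon> (S h)"
    by (rule sweedler_counit_right[where su="(*)"]) (intro lin_intros)
  finally show ?thesis by simp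
qed

lemma sweedler_counit_right_scale:
  assumes "lin_on UNIV sh su f"
  shows "sweedler h (\<lambda>x y. su (\<epsilon> y) (f x)) = f h"
  using sweedler_counit_right[OF assms, of h] lin_onD(2)[OF assms] by simp

lemma sweedler_counit_left_scale:
  assumes "lin_on UNIV sh su f"
  shows "sweedler h (\<lambda>x y. su (\<epsilon> x) (f y)) = f h"
  using sweedler_counit_left[OF assms, of h] lin_onD(2)[OF assms] by simp

lemma antipode_scale: "S (sh c x) = sh c (S x)" using lin_onD(2)[OF S_lin] by simp
lemma sweedler_antipode_right_sandwich:
  "sweedler d (\<lambda>y2 y3. p * (q * y2) * (S y3 * r)) = sh (\<epsilon> d) (p * q * r)"
proof -
  have "sweedler d (\<lambda>y2 y3. p * (q * y2) * (S y3 * r)) = p * q * sweedler d (\<lambda>y2 y3. y2 * S y3) * r"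
    by (rule tlift_lin_pull_eq[where sx=sh and sy=sh]) (intro lin_intros, simp add: mult.assoc)
  also have "\<dots> = sh (\<epsilon> d) (p * q * r)" by (simp add: antipode(2) multH_scale_left multH_scale_right)
  finally show ?thesis .
qed

lemma sweedler_antipode_right_mult: "sweedler d (\<lambda>u v. p * u * S v) = sh (\<epsilon> d) p"
proof -
  have "sweedler d (\<lambda>u v. p * u * S v) = p * sweedler d (\<lambda>u v. u * S v)"
    by (rule tlift_lin_pull_eq[where sx=sh and sy=sh]) (intro lin_intros, simp add: mult.assoc)
  then show ?thesis by (simp add: antipode(2) multH_scale_right)
qed

text \<open>Both sides are computed from \<open>E = \<Sum> S(x\<^sub>1y\<^sub>1) x\<^sub>2y\<^sub>2 S(y\<^sub>3) S(x\<^sub>3)\<close>.\<close>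

lemma antipode_antimult: "S (x * y) = S y * S x"
proof -
  define E where "E = sweedler x (\<lambda>a b. sweedler b (\<lambda>x2 x3. sweedler y (\<lambda>c d. sweedler d (\<lambda>y2 y3. S (a * c) * (x2 * y2) * (S y3 * S x3)))))"
  have "E = sweedler x (\<lambda>a b. sweedler b (\<lambda>x2 x3. sweedler y (\<lambda>c d. sh (\<epsilon> d) (S (a * c) * x2 * S x3))))"
    unfolding E_def by (simp add: sweedler_antipode_right_sandwich)
  also have "\<dots> = sweedler x (\<lambda>a b. sweedler b (\<lambda>x2 x3. S (a * y) * x2 * S x3))"
    by (intro tlift_fun_cong sweedler_counit_right_scale[where su=sh]) (intro lin_intros)
  also have "\<dots> = sweedler x (\<lambda>a b. sh (\<epsilon> b) (S (a * y)))"
    by (intro tlift_fun_cong sweedler_antipode_right_mult)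
  also have "\<dots> = S (x * y)"
    by (intro sweedler_counit_right_scale[where su=sh]) (intro lin_intros)
  finally have E1: "E = S (x * y)" .
  have "E = sweedler x (\<lambda>a x3. sweedler a (\<lambda>x1 x2. sweedler y (\<lambda>c d. sweedler d (\<lambda>y2 y3. S (x1 * c) * (x2 * y2) * (S y3 * S x3)))))"
    unfolding E_def by (rule sweedler_coassoc[OF vs_H, symmetric]) (intro lin_intros)
  also have "\<dots> = sweedler x (\<lambda>a x3. sweedler a (\<lambda>x1 x2. sweedler y (\<lambda>c y3. sweedler c (\<lambda>y1 y2. S (x1 * y1) * (x2 * y2) * (S y3 * S x3)))))"
    by (intro tlift_fun_cong sweedler_coassoc[OF vs_H, symmetric]) (intro lin_intros)
  also have "\<dots> = sweedler x (\<lambda>a x3. sweedler y (\<lambda>c y3. sweedler a (\<lambda>x1 x2. sweedler c (\<lambda>y1 y2. S (x1 * y1) * (x2 * y2) * (S y3 * S x3)))))"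
    by (intro tlift_fun_cong tlift_swap)
  also have "\<dots> = sweedler x (\<lambda>a x3. sweedler y (\<lambda>c y3. sweedler (a * c) (\<lambda>u v. S u * v * (S y3 * S x3))))"
    by (intro tlift_fun_cong sweedler_mult[OF vs_H, symmetric]) (intro lin_intros)
  also have "\<dots> = sweedler x (\<lambda>a x3. sweedler y (\<lambda>c y3. sh (\<epsilon> a) (sh (\<epsilon> c) (S y3 * S x3))))"
  proof (intro tlift_fun_cong)
    fix a x3 c y3
    have "sweedler (a * c) (\<lambda>u v. S u * v * (S y3 * S x3)) = sweedler (a * c) (\<lambda>u v. S u * v) * (S y3 * S x3)"
      by (rule tlift_lin_pull_eq[where sx=sh and sy=sh]) (intro lin_intros, simp)
    then show "sweedler (a * c) (\<lambda>u v. S u * v * (S y3 * S x3)) = sh (\<epsilon> a) (sh (\<epsilon> c) (S y3 * S x3))"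
      by (simp add: antipode(1) eps_mult multH_scale_left vector_spaceD[OF vs_H])
  qed
  also have "\<dots> = sweedler x (\<lambda>a x3. sh (\<epsilon> a) (sweedler y (\<lambda>c y3. sh (\<epsilon> c) (S y3 * S x3))))"
    by (intro tlift_fun_cong tlift_lin_pull_eq[where sx=sh and sy=sh]) (intro lin_intros, simp)
  also have "\<dots> = sweedler x (\<lambda>a x3. sh (\<epsilon> a) (S y * S x3))"
    by (intro tlift_fun_cong arg_cong[where f="sh _"] sweedler_counit_left_scale[where su=sh]) (intro lin_intros)
  also have "\<dots> = S y * S x"
    by (intro sweedler_counit_left_scale[where su=sh]) (intro lin_intros)
  finally show ?thesis using E1 by simp
qed

lemma sweedler_coassoc_outer:
  assumes su: "vector_space su"
    and l1: "\<And>y b c. lin_on UNIV sh su (\<lambda>x. G x y b c)" and l2: "\<And>x b c. lin_on UNIV sh su (\<lambda>y. G x y b c)"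
    and l3: "\<And>x y c. lin_on UNIV sh su (\<lambda>b. G x y b c)" and l4: "\<And>x y b. lin_on UNIV sh su (\<lambda>c. G x y b c)"
  shows "sweedler h (\<lambda>a r. sweedler r (\<lambda>b c. sweedler a (\<lambda>x y. G x y b c))) = sweedler h (\<lambda>x r. sweedler r (\<lambda>y r'. sweedler r' (\<lambda>b c. G x y b c)))"
proof -
  have "sweedler h (\<lambda>a r. sweedler r (\<lambda>b c. sweedler a (\<lambda>x y. G x y b c))) = sweedler h (\<lambda>a r. sweedler a (\<lambda>x y. sweedler r (\<lambda>b c. G x y b c)))"
    by (intro tlift_fun_cong tlift_swap)
  also have "\<dots> = sweedler h (\<lambda>x r. sweedler r (\<lambda>y r'. sweedler r' (\<lambda>b c. G x y b c)))"
    by (rule sweedler_coassoc[OF su]) (intro lin_intros su l1 l2 l3 l4)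
  finally show ?thesis .
qed

lemma sweedler_coassoc_inner:
  assumes su: "vector_space su"
    and l1: "\<And>y b c. lin_on UNIV sh su (\<lambda>x. G x y b c)" and l2: "\<And>x b c. lin_on UNIV sh su (\<lambda>y. G x y b c)"
    and l3: "\<And>x y c. lin_on UNIV sh su (\<lambda>b. G x y b c)" and l4: "\<And>x y b. lin_on UNIV sh su (\<lambda>c. G x y b c)"
  shows "sweedler h (\<lambda>a r. sweedler r (\<lambda>b c. sweedler b (\<lambda>x y. G a x y c))) = sweedler h (\<lambda>a r. sweedler r (\<lambda>x r'. sweedler r' (\<lambda>y c. G a x y c)))"
  by (intro tlift_fun_cong sweedler_coassoc[OF su]) (intro lin_intros su l1 l2 l3 l4)

lemma sweedler_antipode_contract:
  assumes su: "vector_space su" and bl: "bilin_on UNIV UNIV sh sh su \<beta>"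
  shows "sweedler r (\<lambda>h2 r'. sweedler r' (\<lambda>h3 h4. sweedler h2 (\<lambda>u v. \<beta> (p * u * S h4) (q * v * S h3))))
       = su (\<epsilon> r) (\<beta> p q)"
proof -
  have bl1: "lin_on UNIV sh su (\<lambda>v. \<beta> v w)" for w using bl by (auto dest: bilin_on_linD)
  have bl2: "lin_on UNIV sh su (\<lambda>w. \<beta> v w)" for v using bl by (auto dest: bilin_on_linD)
  have "sweedler r (\<lambda>h2 r'. sweedler r' (\<lambda>h3 h4. sweedler h2 (\<lambda>u v. \<beta> (p * u * S h4) (q * v * S h3))))
      = sweedler r (\<lambda>u r'. sweedler r' (\<lambda>b h4. sweedler b (\<lambda>v h3. \<beta> (p * u * S h4) (q * v * S h3))))"
    by (subst sweedler_coassoc_outer[OF su], (intro lin_intros lin_on_bilin_left[OF bl] lin_on_bilin_right[OF bl] lin_on_bilin_curry[OF bl] su)+)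
      (rule sweedler_coassoc_inner[OF su, symmetric], (intro lin_intros lin_on_bilin_left[OF bl] lin_on_bilin_right[OF bl] lin_on_bilin_curry[OF bl] su)+)
  also have "\<dots> = sweedler r (\<lambda>u r'. sweedler r' (\<lambda>b h4. su (\<epsilon> b) (\<beta> (p * u * S h4) q)))"
  proof (intro tlift_fun_cong)
    fix u r' b h4
    have "sweedler b (\<lambda>v h3. \<beta> (p * u * S h4) (q * v * S h3)) = \<beta> (p * u * S h4) (sweedler b (\<lambda>v h3. q * v * S h3))"
      by (rule tlift_lin_pull_eq[where sx=sh and sy=su]) (intro lin_intros lin_on_bilin_left[OF bl] lin_on_bilin_right[OF bl] lin_on_bilin_curry[OF bl] su, simp)
    then show "sweedler b (\<lambda>v h3. \<beta> (p * u * S h4) (q * v * S h3)) = su (\<epsilon> b) (\<beta> (p * u * S h4) q)"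
      using sweedler_antipode_right_mult[where d=b and p=q] lin_onD(2)[OF bl2] by simp
  qed
  also have "\<dots> = sweedler r (\<lambda>u h4. \<beta> (p * u * S h4) q)"
    by (intro tlift_fun_cong sweedler_counit_left_scale[where su=su]) (intro lin_intros lin_on_bilin_left[OF bl] lin_on_bilin_right[OF bl] lin_on_bilin_curry[OF bl] su)
  also have "\<dots> = \<beta> (sweedler r (\<lambda>u h4. p * u * S h4)) q"
    by (rule tlift_lin_pull_eq[where sx=sh and sy=su]) (intro lin_intros lin_on_bilin_left[OF bl] lin_on_bilin_right[OF bl] lin_on_bilin_curry[OF bl] su, simp)
  also have "\<dots> = su (\<epsilon> r) (\<beta> p q)"
    using sweedler_antipode_right_mult[where d=r and p=p] lin_onD(2)[OF bl1] by simp
  finally show ?thesis .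
qed

lemma sweedler_antipode_comult_contract:
  assumes su: "vector_space su" and bl: "bilin_on UNIV UNIV sh sh su \<beta>"
  shows "sweedler a (\<lambda>h1 h2. sweedler (S h1) (\<lambda>p q. sweedler h2 (\<lambda>u v. \<beta> (p * u * m) (q * v * n))))
       = su (\<epsilon> a) (\<beta> m n)"
proof -
  define Y where "Y x y = \<beta> (x * m) (y * n)" for x y
  have blY: "bilin_on UNIV UNIV sh sh su Y" unfolding Y_def by (intro lin_intros lin_on_bilin_left[OF bl] lin_on_bilin_right[OF bl] lin_on_bilin_curry[OF bl] su)
  have "sweedler a (\<lambda>h1 h2. sweedler (S h1) (\<lambda>p q. sweedler h2 (\<lambda>u v. \<beta> (p * u * m) (q * v * n))))
      = sweedler a (\<lambda>h1 h2. sweedler (S h1 * h2) Y)"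
    unfolding Y_def by (intro tlift_fun_cong sweedler_mult[OF su, symmetric]) (intro lin_intros lin_on_bilin_left[OF bl] lin_on_bilin_right[OF bl] lin_on_bilin_curry[OF bl] su)
  also have "\<dots> = sweedler (sweedler a (\<lambda>h1 h2. S h1 * h2)) Y"
    by (rule tlift_lin_pull_eq[where sx=sh and sy=su and f="\<lambda>z. sweedler z Y"]) (intro lin_intros blY su, simp)
  also have "\<dots> = su (\<epsilon> a) (Y 1 1)"
    unfolding antipode(1) lin_onD(2)[OF Delta_lin, simplified]
    by (simp add: tHH.tlift_scale[OF su blY] Delta_tspace sweedler_one[OF su blY])
  finally show ?thesis unfolding Y_def by simp
qed

text \<open>Both sides are computed from
  \<open>E = \<Sum> \<beta> (S(h\<^sub>1)' h\<^sub>2' S(h\<^sub>4)) (S(h\<^sub>1)'' h\<^sub>2'' S(h\<^sub>3))\<close>, where \<open>h\<^sub>1 \<otimes> h\<^sub>2 \<otimes> h\<^sub>3 \<otimes> h\<^sub>4\<close>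
  is the iterated coproduct of \<open>h\<close> and primes denote a further coproduct: contracting
  \<open>h\<^sub>2'' S(h\<^sub>3)\<close> and \<open>h\<^sub>2' S(h\<^sub>4)\<close> leaves the left side, contracting \<open>S(h\<^sub>1) h\<^sub>2\<close> the right side.\<close>

lemma antipode_anticomult:
  assumes su: "vector_space su" and bl: "bilin_on UNIV UNIV sh sh su \<beta>"
  shows "sweedler (S h) \<beta> = sweedler h (\<lambda>a b. \<beta> (S b) (S a))"
proof -
  define X where "X h1 h2 h3 h4 = sweedler (S h1) (\<lambda>p q. sweedler h2 (\<lambda>u v. \<beta> (p * u * S h4) (q * v * S h3)))"
    for h1 h2 h3 h4
  define E where "E = sweedler h (\<lambda>h1 r. sweedler r (\<lambda>h2 r'. sweedler r' (\<lambda>h3 h4. X h1 h2 h3 h4)))"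
  have "E = sweedler h (\<lambda>h1 r. sweedler (S h1) (\<lambda>p q. sweedler r (\<lambda>h2 r'. sweedler r' (\<lambda>h3 h4.
      sweedler h2 (\<lambda>u v. \<beta> (p * u * S h4) (q * v * S h3))))))"
    unfolding E_def X_def
  proof (intro tlift_fun_cong)
    fix h1 r
    let ?T = "\<lambda>h2 h3 h4 p q. sweedler h2 (\<lambda>u v. \<beta> (p * u * S h4) (q * v * S h3))"
    have "sweedler r (\<lambda>h2 r'. sweedler r' (\<lambda>h3 h4. sweedler (S h1) (?T h2 h3 h4)))
        = sweedler r (\<lambda>h2 r'. sweedler (S h1) (\<lambda>p q. sweedler r' (\<lambda>h3 h4. ?T h2 h3 h4 p q)))"
      by (intro tlift_fun_cong tlift_swap)
    also have "\<dots> = sweedler (S h1) (\<lambda>p q. sweedler r (\<lambda>h2 r'. sweedler r' (\<lambda>h3 h4. ?T h2 h3 h4 p q)))"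
      by (rule tlift_swap)
    finally show "sweedler r (\<lambda>h2 r'. sweedler r' (\<lambda>h3 h4. sweedler (S h1) (?T h2 h3 h4)))
        = sweedler (S h1) (\<lambda>p q. sweedler r (\<lambda>h2 r'. sweedler r' (\<lambda>h3 h4. ?T h2 h3 h4 p q)))" .
  qed
  also have "\<dots> = sweedler h (\<lambda>h1 r. su (\<epsilon> r) (sweedler (S h1) \<beta>))"
    by (simp only: sweedler_antipode_contract[OF su bl] tlift_scale_fun[OF su])
  also have "\<dots> = sweedler (S h) \<beta>"
    by (rule sweedler_counit_right_scale[where su=su]) (intro lin_intros lin_on_bilin_left[OF bl] lin_on_bilin_right[OF bl] lin_on_bilin_curry[OF bl] su)
  finally have E1: "E = sweedler (S h) \<beta>" .
  have "E = sweedler h (\<lambda>a r. sweedler r (\<lambda>h3 h4. sweedler a (\<lambda>h1 h2. X h1 h2 h3 h4)))"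
    unfolding E_def X_def by (rule sweedler_coassoc_outer[OF su, symmetric]) (intro lin_intros lin_on_bilin_left[OF bl] lin_on_bilin_right[OF bl] lin_on_bilin_curry[OF bl] su)+
  also have "\<dots> = sweedler h (\<lambda>a r. su (\<epsilon> a) (sweedler r (\<lambda>h3 h4. \<beta> (S h4) (S h3))))"
    unfolding X_def by (simp only: sweedler_antipode_comult_contract[OF su bl] tlift_scale_fun[OF su])
  also have "\<dots> = sweedler h (\<lambda>a b. \<beta> (S b) (S a))"
    by (rule sweedler_counit_left_scale[where su=su]) (intro lin_intros lin_on_bilin_left[OF bl] lin_on_bilin_right[OF bl] lin_on_bilin_curry[OF bl] su)
  finally show ?thesis using E1 by simp
qed

lemma S_Sinv: "S (Sinv x) = x" using Sbij by (simp add: bij_def surj_f_inv_f)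
lemma Sinv_S: "Sinv (S x) = x" using Sbij by (simp add: bij_def inv_f_f)
lemma antipode_inj: "S x = S y \<Longrightarrow> x = y" using Sinv_S by metis

lemma Sinv_lin: "lin_on UNIV sh sh Sinv"
proof (rule lin_onI)
  fix x y show "Sinv (x + y) = Sinv x + Sinv y"
    by (rule antipode_inj) (simp add: S_Sinv lin_onD(1)[OF S_lin])
next
  fix c x show "Sinv (sh c x) = sh c (Sinv x)"
    by (rule antipode_inj) (simp add: S_Sinv lin_onD(2)[OF S_lin])
qed

lemma lin_Sinv[lin_intros]: "lin_on M s1 sh f \<Longrightarrow> lin_on M s1 sh (\<lambda>x. Sinv (f x))"
  using Sinv_lin by (intro lin_onI) (auto simp: lin_onD)

lemma Sinv_one: "Sinv 1 = 1" by (rule antipode_inj) (simp add: S_Sinv antipode_one)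
lemma counit_Sinv: "\<epsilon> (Sinv h) = \<epsilon> h" using counit_antipode[of "Sinv h"] by (simp add: S_Sinv)
lemma Sinv_antimult: "Sinv (x * y) = Sinv y * Sinv x"
  by (rule antipode_inj) (simp add: S_Sinv antipode_antimult)
lemma Sinv_anticomult:
  assumes su: "vector_space su" and bl: "bilin_on UNIV UNIV sh sh su \<beta>"
  shows "sweedler (Sinv h) \<beta> = sweedler h (\<lambda>a b. \<beta> (Sinv b) (Sinv a))"
proof -
  have "sweedler h (\<lambda>a b. \<beta> (Sinv b) (Sinv a)) = sweedler (S (Sinv h)) (\<lambda>a b. \<beta> (Sinv b) (Sinv a))" by (simp add: S_Sinv)
  also have "\<dots> = sweedler (Sinv h) (\<lambda>a b. \<beta> (Sinv (S a)) (Sinv (S b)))"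
    by (rule antipode_anticomult[OF su]) (intro lin_intros lin_on_bilin_left[OF bl] lin_on_bilin_right[OF bl] lin_on_bilin_curry[OF bl] su)
  finally show ?thesis by (simp add: Sinv_S)
qed

lemma sweedler_Sinv_mult_left: "sweedler h (\<lambda>a b. Sinv b * a) = sh (\<epsilon> h) 1"
proof (rule antipode_inj)
  have "S (sweedler h (\<lambda>a b. Sinv b * a)) = sweedler h (\<lambda>a b. S (Sinv b * a))"
    by (rule tlift_lin_pull[OF S_lin])
  also have "\<dots> = sh (\<epsilon> h) 1" by (simp add: antipode_antimult S_Sinv antipode(1))
  finally show "S (sweedler h (\<lambda>a b. Sinv b * a)) = S (sh (\<epsilon> h) 1)" by (simp add: antipode_scale antipode_one)
qed

lemma sweedler_mult_Sinv_right: "sweedler h (\<lambda>a b. b * Sinv a) = sh (\<epsilon> h) 1"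
proof (rule antipode_inj)
  have "S (sweedler h (\<lambda>a b. b * Sinv a)) = sweedler h (\<lambda>a b. S (b * Sinv a))"
    by (rule tlift_lin_pull[OF S_lin])
  also have "\<dots> = sh (\<epsilon> h) 1" by (simp add: antipode_antimult S_Sinv antipode(2))
  finally show "S (sweedler h (\<lambda>a b. b * Sinv a)) = S (sh (\<epsilon> h) 1)" by (simp add: antipode_scale antipode_one)
qed

section \<open>The bialgebra \<open>H \<otimes> H\<^sup>o\<^sup>p\<close>\<close>

lemma subsp_K: "subsp K tscale" by (rule subsp_tspace[OF subsp_H])

sublocale tKA: tensor_subspaces K UNIV tscale sa by (intro tensor_subspaces.intro subsp_K subsp_A)
sublocale tKK: tensor_subspaces K K tscale tscale by (intro tensor_subspaces.intro subsp_K)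

lemma tens_in_K: "tens sh sh h g \<in> K" by (rule tspace_tens) auto

lemma K_lin_eqI:
  assumes "lin_on K tscale su F" "lin_on K tscale su G"
    and "\<And>h g. F (tens sh sh h g) = G (tens sh sh h g)" and "x \<in> K"
  shows "F x = G x"
  using tspace_lin_eqI[OF assms(1,2) _ assms(4)] assms(3) by blast

lemma hhop_mult_kernel_bilin: "bilin_on UNIV UNIV sh sh tscale (\<lambda>a b. tlift_HH (\<lambda>c d. tens sh sh (a * c) (d * b)) y)"
  by (intro lin_intros)

lemma hhop_mult_tens: "mK (tens sh sh h g) (tens sh sh h' g') = tens sh sh (h * h') (g' * g)"
  unfolding hhop_mult_def tmult_def
  by (simp add: tHH.tlift_tens[OF vector_space_tscale hhop_mult_kernel_bilin] tHH.tlift_tens[OF vector_space_tscale] lin_intros)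

lemma hhop_mult_in_K: "x \<in> K \<Longrightarrow> y \<in> K \<Longrightarrow> mK x y \<in> K"
  unfolding hhop_mult_def by (rule tmult_tspace[OF subsp_H subsp_H]) auto

lemma hhop_mult_lin_left: "lin_on K tscale tscale (\<lambda>x. mK x y)"
  unfolding hhop_mult_def tmult_def by (rule tlift_lin_on[OF subsp_H subsp_H vector_space_tscale hhop_mult_kernel_bilin])

lemma hhop_mult_lin_right: "lin_on K tscale tscale (\<lambda>y. mK x y)"
  unfolding hhop_mult_def tmult_def
  by (rule lin_on_tlift_fun_UNIV[OF vector_space_tscale]) (rule tlift_lin_on[OF subsp_H subsp_H vector_space_tscale], intro lin_intros)

lemma hhop_unit_in_K: "uK \<in> K" unfolding hhop_unit_def by (rule tens_in_K)

lemma hhop_comult_kernel_bilin: "bilin_on UNIV UNIV sh sh tscale (\<lambda>h h'. sweedler h (\<lambda>h1 h2. sweedler h' (\<lambda>g1 g2.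
         tens tscale tscale (tens sh sh h1 g1) (tens sh sh h2 g2))))"
  by (intro lin_intros)

lemma hhop_comult_tens: "\<Delta>K (tens sh sh h g) = sweedler h (\<lambda>h1 h2. sweedler g (\<lambda>g1 g2. tens tscale tscale (tens sh sh h1 g1) (tens sh sh h2 g2)))"
  unfolding hhop_comult_def by (rule tHH.tlift_tens[OF vector_space_tscale hhop_comult_kernel_bilin]) auto

lemma hhop_comult_tspace: "\<Delta>K x \<in> tspace K K tscale tscale"
  unfolding hhop_comult_def
  by (intro tlift_in_subsp_UNIV[OF subsp_tspace[OF subsp_K]] tspace_tens tens_in_K)

lemma hhop_comult_lin: "lin_on K tscale tscale \<Delta>K"
  unfolding hhop_comult_def by (rule tlift_lin_on[OF subsp_H subsp_H vector_space_tscale hhop_comult_kernel_bilin])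

lemma hhop_counit_tens: "\<epsilon>K (tens sh sh h g) = \<epsilon> h * \<epsilon> g"
  unfolding hhop_counit_def by (rule tHH.tlift_tens[OF vector_space_mult]) (intro lin_intros, auto)

lemma hhop_counit_lin: "lin_on K tscale (*) \<epsilon>K"
  unfolding hhop_counit_def by (rule tlift_lin_on[OF subsp_H subsp_H vector_space_mult]) (intro lin_intros)

lemma tlift_hhop_comult_tens:
  assumes su: "vector_space su" and bl: "bilin_on K K tscale tscale su \<beta>"
  shows "tlift_KK \<beta> (\<Delta>K (tens sh sh h g))
       = sweedler h (\<lambda>h1 h2. sweedler g (\<lambda>g1 g2. \<beta> (tens sh sh h1 g1) (tens sh sh h2 g2)))"
  unfolding hhop_comult_tens
  by (simp add: tKK.tlift_comp[OF su bl Delta_tspace] tlift_in_subsp_UNIV[OF subsp_tspace[OF subsp_K]]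
      tspace_tens tens_in_K tKK.tlift_tens[OF su bl])

lemma tlift_hhop_comult:
  assumes su: "vector_space su" and bl: "bilin_on K K tscale tscale su \<beta>" and x: "x \<in> K"
  shows "tlift_KK \<beta> (\<Delta>K x)
       = tlift_HH (\<lambda>h h'. sweedler h (\<lambda>h1 h2. sweedler h' (\<lambda>g1 g2. \<beta> (tens sh sh h1 g1) (tens sh sh h2 g2)))) x"
  using lin_on_tspace_eq_tlift[OF lin_on_comp[OF hhop_comult_lin hhop_comult_tspace tlift_lin_on[OF subsp_K subsp_K su bl]] x]
  by (simp add: tlift_hhop_comult_tens[OF su bl])

lemma hhop_mult_bilin: "bilin_on K K tscale tscale tscale mK"
  by (rule bilin_on_linI) (auto intro: hhop_mult_lin_left hhop_mult_lin_right)

lemma hhop_mult_assoc: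
  assumes x: "x \<in> K" and y: "y \<in> K" and z: "z \<in> K"
  shows "mK (mK x y) z = mK x (mK y z)"
proof -
  have g3: "mK (mK (tens sh sh h g) (tens sh sh h' g')) z = mK (tens sh sh h g) (mK (tens sh sh h' g') z)" for h g h' g'
  proof (rule K_lin_eqI[OF hhop_mult_lin_right _ _ z])
    show "lin_on K tscale tscale (\<lambda>z. mK (tens sh sh h g) (mK (tens sh sh h' g') z))"
      by (rule lin_on_comp[OF hhop_mult_lin_right hhop_mult_in_K[OF tens_in_K] hhop_mult_lin_right])
    fix h'' g'' show "mK (mK (tens sh sh h g) (tens sh sh h' g')) (tens sh sh h'' g'') = mK (tens sh sh h g) (mK (tens sh sh h' g') (tens sh sh h'' g''))"
      by (simp add: hhop_mult_tens mult.assoc)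
  qed
  have g2: "mK (mK (tens sh sh h g) y) z = mK (tens sh sh h g) (mK y z)" for h g
  proof (rule K_lin_eqI[OF _ _ _ y, where F="\<lambda>y. mK (mK (tens sh sh h g) y) z" and G="\<lambda>y. mK (tens sh sh h g) (mK y z)"])
    show "lin_on K tscale tscale (\<lambda>y. mK (mK (tens sh sh h g) y) z)"
      by (rule lin_on_comp[OF hhop_mult_lin_right hhop_mult_in_K[OF tens_in_K] hhop_mult_lin_left])
    show "lin_on K tscale tscale (\<lambda>y. mK (tens sh sh h g) (mK y z))"
      by (rule lin_on_comp[OF hhop_mult_lin_left hhop_mult_in_K[OF _ z] hhop_mult_lin_right])
  qed (rule g3)
  show ?thesis
  proof (rule K_lin_eqI[OF _ _ _ x, where F="\<lambda>x. mK (mK x y) z" and G="\<lambda>x. mK x (mK y z)"])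
    show "lin_on K tscale tscale (\<lambda>x. mK (mK x y) z)"
      by (rule lin_on_comp[OF hhop_mult_lin_left hhop_mult_in_K[OF _ y] hhop_mult_lin_left])
    show "lin_on K tscale tscale (\<lambda>x. mK x (mK y z))" by (rule hhop_mult_lin_left)
  qed (rule g2)
qed

lemma hhop_mult_unit: "x \<in> K \<Longrightarrow> mK uK x = x" "x \<in> K \<Longrightarrow> mK x uK = x"
proof -
  assume x: "x \<in> K"
  show "mK uK x = x"
    by (rule K_lin_eqI[OF hhop_mult_lin_right lin_id _ x]) (simp add: hhop_unit_def hhop_mult_tens)
  show "mK x uK = x"
    by (rule K_lin_eqI[OF hhop_mult_lin_left lin_id _ x]) (simp add: hhop_unit_def hhop_mult_tens)
qed

lemma alg_hhop: "alg K tscale mK uK"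
  unfolding alg_def using subsp_K hhop_unit_in_K hhop_mult_in_K hhop_mult_bilin hhop_mult_assoc hhop_mult_unit by auto

lemma tens3_K_bilin12: "bilin_on K K tscale tscale tscale (\<lambda>u v. tens tscale tscale u (tens tscale tscale v w))"
  if "w \<in> K" for w
  using trilin_on_bilin12[OF tens3_trilin that] .

lemma tens3_K_bilin23: "bilin_on K K tscale tscale tscale (\<lambda>v w. tens tscale tscale u (tens tscale tscale v w))"
  if "u \<in> K" for u
  using trilin_on_bilin23[OF tens3_trilin that] .

lemma hhop_comult_tassoc_kernel_bilin:
  "bilin_on K K tscale tscale tscale (\<lambda>p w. tlift_KK (\<lambda>u v. tens3 tscale tscale tscale u v w) (\<Delta>K p))"
proof (rule bilin_on_linI)
  fix w assume "w \<in> K"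
  then show "lin_on K tscale tscale (\<lambda>p. tlift_KK (\<lambda>u v. tens3 tscale tscale tscale u v w) (\<Delta>K p))"
    by (rule lin_on_comp[OF hhop_comult_lin hhop_comult_tspace tlift_lin_on[OF subsp_K subsp_K vector_space_tscale tens3_K_bilin12]])
next
  fix p
  show "lin_on K tscale tscale (\<lambda>w. tlift_KK (\<lambda>u v. tens3 tscale tscale tscale u v w) (\<Delta>K p))"
    by (rule lin_on_tlift_fun[OF vector_space_tscale hhop_comult_tspace]) (rule lin_onI, simp_all add: tens_add_right tens_scale_right)
qed

lemma hhop_comult_tmap_kernel_bilin:
  "bilin_on K K tscale tscale tscale (\<lambda>u p. tlift_KK (\<lambda>v w. tens3 tscale tscale tscale u v w) (\<Delta>K p))"
proof (rule bilin_on_linI)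
  fix p
  show "lin_on K tscale tscale (\<lambda>u. tlift_KK (\<lambda>v w. tens3 tscale tscale tscale u v w) (\<Delta>K p))"
    by (rule lin_on_tlift_fun[OF vector_space_tscale hhop_comult_tspace]) (rule lin_onI, simp_all add: tens_add_left tens_scale_left)
next
  fix u assume "u \<in> K"
  then show "lin_on K tscale tscale (\<lambda>p. tlift_KK (\<lambda>v w. tens3 tscale tscale tscale u v w) (\<Delta>K p))"
    by (rule lin_on_comp[OF hhop_comult_lin hhop_comult_tspace tlift_lin_on[OF subsp_K subsp_K vector_space_tscale tens3_K_bilin23]])
qed

lemma hhop_comult_coassoc:
  assumes x: "x \<in> K"
  shows "tassoc K K K tscale tscale tscale (tmap K K tscale tscale tscale tscale \<Delta>K id (\<Delta>K x))
       = tmap K K tscale tscale tscale tscale id \<Delta>K (\<Delta>K x)"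
proof (rule tassoc_tmap_eqI[OF subsp_K subsp_K subsp_K hhop_comult_tspace hhop_comult_tspace hhop_comult_tspace])
  let ?b = "\<lambda>a b c a' b' c'. tens3 tscale tscale tscale (tens sh sh a a') (tens sh sh b b') (tens sh sh c c')"
  let ?F = "tlift_HH (\<lambda>h h'. sweedler h (\<lambda>a r. sweedler r (\<lambda>b c. sweedler h' (\<lambda>a' r'. sweedler r' (\<lambda>b' c'.
      ?b a b c a' b' c'))))) x"
  have "tlift_KK (\<lambda>p w. tlift_KK (\<lambda>u v. tens3 tscale tscale tscale u v w) (\<Delta>K p)) (\<Delta>K x)
      = tlift_HH (\<lambda>h h'. sweedler h (\<lambda>r c. sweedler h' (\<lambda>r' c'. sweedler r (\<lambda>a b. sweedler r' (\<lambda>a' b'.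
          ?b a b c a' b' c'))))) x"
    by (simp add: tlift_hhop_comult[OF vector_space_tscale hhop_comult_tassoc_kernel_bilin x]
        tlift_hhop_comult_tens[OF vector_space_tscale tens3_K_bilin12] tens_in_K)
  also have "\<dots> = ?F"
  proof (rule tlift_fun_cong)
    fix h h'
    have "sweedler h (\<lambda>r c. sweedler h' (\<lambda>r' c'. sweedler r (\<lambda>a b. sweedler r' (\<lambda>a' b'. ?b a b c a' b' c'))))
        = sweedler h (\<lambda>r c. sweedler r (\<lambda>a b. sweedler h' (\<lambda>r' c'. sweedler r' (\<lambda>a' b'. ?b a b c a' b' c'))))"
      by (intro tlift_fun_cong tlift_swap)
    also have "\<dots> = sweedler h (\<lambda>a r. sweedler r (\<lambda>b c. sweedler h' (\<lambda>r' c'. sweedler r' (\<lambda>a' b'. ?b a b c a' b' c'))))"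
      by (rule sweedler_coassoc[OF vector_space_tscale]) (intro lin_intros)
    also have "\<dots> = sweedler h (\<lambda>a r. sweedler r (\<lambda>b c. sweedler h' (\<lambda>a' r'. sweedler r' (\<lambda>b' c'. ?b a b c a' b' c'))))"
      by (intro tlift_fun_cong sweedler_coassoc[OF vector_space_tscale]) (intro lin_intros)
    finally show "sweedler h (\<lambda>r c. sweedler h' (\<lambda>r' c'. sweedler r (\<lambda>a b. sweedler r' (\<lambda>a' b'. ?b a b c a' b' c'))))
        = sweedler h (\<lambda>a r. sweedler r (\<lambda>b c. sweedler h' (\<lambda>a' r'. sweedler r' (\<lambda>b' c'. ?b a b c a' b' c'))))" .
  qed
  also have "\<dots> = tlift_HH (\<lambda>h h'. sweedler h (\<lambda>a r. sweedler h' (\<lambda>a' r'. sweedler r (\<lambda>b c.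
      sweedler r' (\<lambda>b' c'. ?b a b c a' b' c'))))) x"
    by (intro tlift_fun_cong tlift_swap)
  also have "\<dots> = tlift_KK (\<lambda>u p. tlift_KK (\<lambda>v w. tens3 tscale tscale tscale u v w) (\<Delta>K p)) (\<Delta>K x)"
    by (simp add: tlift_hhop_comult[OF vector_space_tscale hhop_comult_tmap_kernel_bilin x]
        tlift_hhop_comult_tens[OF vector_space_tscale tens3_K_bilin23] tens_in_K)
  finally show "tlift_KK (\<lambda>p w. tlift_KK (\<lambda>u v. tens3 tscale tscale tscale u v w) (\<Delta>K p)) (\<Delta>K x)
      = tlift_KK (\<lambda>u p. tlift_KK (\<lambda>v w. tens3 tscale tscale tscale u v w) (\<Delta>K p)) (\<Delta>K x)" .
qed

lemma hhop_comult_counit_left: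
  assumes x: "x \<in> K"
  shows "tlift_KK (\<lambda>a b. tscale (\<epsilon>K a) b) (\<Delta>K x) = x"
proof -
  have bl: "bilin_on K K tscale tscale tscale (\<lambda>a b. tscale (\<epsilon>K a) b)"
    by (rule bilin_on_linI) (auto intro: lin_scale_scalar[OF vector_space_tscale hhop_counit_lin] lin_scale_const[OF vector_space_tscale lin_id])
  have "tlift_KK (\<lambda>a b. tscale (\<epsilon>K a) b) (\<Delta>K x) = tlift_HH (tens sh sh) x"
    unfolding tlift_hhop_comult[OF vector_space_tscale bl x]
  proof (rule tlift_fun_cong)
    fix h h'
    have "sweedler h (\<lambda>h1 h2. sweedler h' (\<lambda>g1 g2. tscale (\<epsilon>K (tens sh sh h1 g1)) (tens sh sh h2 g2)))
       = sweedler h (\<lambda>h1 h2. tscale (\<epsilon> h1) (sweedler h' (\<lambda>g1 g2. tscale (\<epsilon> g1) (tens sh sh h2 g2))))"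
      by (simp add: hhop_counit_tens tscale_mult tlift_scale_fun[OF vector_space_tscale])
    also have "\<dots> = sweedler h (\<lambda>h1 h2. tscale (\<epsilon> h1) (tens sh sh h2 h'))"
      by (intro tlift_fun_cong arg_cong[where f="tscale _"] sweedler_counit_left_scale[where su=tscale]) (intro lin_intros)
    also have "\<dots> = tens sh sh h h'"
      by (rule sweedler_counit_left_scale[where su=tscale]) (intro lin_intros)
    finally show "sweedler h (\<lambda>h1 h2. sweedler h' (\<lambda>g1 g2. tscale (\<epsilon>K (tens sh sh h1 g1)) (tens sh sh h2 g2))) = tens sh sh h h'" .
  qed
  then show ?thesis using tlift_eta[OF x] by simp
qed

lemma hhop_comult_counit_right:
  assumes x: "x \<in> K"
  shows "tlift_KK (\<lambda>a b. tscale (\<epsilon>K b) a) (\<Delta>K x) = x"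
proof -
  have bl: "bilin_on K K tscale tscale tscale (\<lambda>a b. tscale (\<epsilon>K b) a)"
    by (rule bilin_on_linI) (auto intro: lin_scale_scalar[OF vector_space_tscale hhop_counit_lin] lin_scale_const[OF vector_space_tscale lin_id])
  have "tlift_KK (\<lambda>a b. tscale (\<epsilon>K b) a) (\<Delta>K x) = tlift_HH (tens sh sh) x"
    unfolding tlift_hhop_comult[OF vector_space_tscale bl x]
  proof (rule tlift_fun_cong)
    fix h h'
    have "sweedler h (\<lambda>h1 h2. sweedler h' (\<lambda>g1 g2. tscale (\<epsilon>K (tens sh sh h2 g2)) (tens sh sh h1 g1)))
       = sweedler h (\<lambda>h1 h2. tscale (\<epsilon> h2) (sweedler h' (\<lambda>g1 g2. tscale (\<epsilon> g2) (tens sh sh h1 g1))))"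
      by (simp add: hhop_counit_tens tscale_mult tlift_scale_fun[OF vector_space_tscale])
    also have "\<dots> = sweedler h (\<lambda>h1 h2. tscale (\<epsilon> h2) (tens sh sh h1 h'))"
      by (intro tlift_fun_cong arg_cong[where f="tscale _"] sweedler_counit_right_scale[where su=tscale]) (intro lin_intros)
    also have "\<dots> = tens sh sh h h'"
      by (rule sweedler_counit_right_scale[where su=tscale]) (intro lin_intros)
    finally show "sweedler h (\<lambda>h1 h2. sweedler h' (\<lambda>g1 g2. tscale (\<epsilon>K (tens sh sh h2 g2)) (tens sh sh h1 g1))) = tens sh sh h h'" .
  qed
  then show ?thesis using tlift_eta[OF x] by simp
qed

lemma coalg_hhop: "coalg K tscale \<Delta>K \<epsilon>K"
  unfolding coalg_def using subsp_K hhop_comult_tspace hhop_comult_lin hhop_counit_lin hhop_comult_coassoc hhop_comult_counit_left hhop_comult_counit_right by auto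

lemma hhop_tmult_inner_bilin: "a \<in> K \<Longrightarrow> b \<in> K \<Longrightarrow> bilin_on K K tscale tscale tscale (\<lambda>c d. tens tscale tscale (mK a c) (mK b d))"
  by (rule bilin_on_linI) (auto intro!: lin_tens_left lin_tens_right hhop_mult_lin_left hhop_mult_lin_right)

lemma hhop_tmult_kernel_bilin:
  assumes Y: "Y \<in> tspace K K tscale tscale"
  shows "bilin_on K K tscale tscale tscale (\<lambda>a b. tlift_KK (\<lambda>c d. tens tscale tscale (mK a c) (mK b d)) Y)"
proof (rule bilin_on_linI)
  fix b assume "b \<in> K"
  show "lin_on K tscale tscale (\<lambda>a. tlift_KK (\<lambda>c d. tens tscale tscale (mK a c) (mK b d)) Y)"
    by (rule lin_on_tlift_fun[OF vector_space_tscale Y]) (intro lin_tens_left hhop_mult_lin_left)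
next
  fix a assume "a \<in> K"
  show "lin_on K tscale tscale (\<lambda>b. tlift_KK (\<lambda>c d. tens tscale tscale (mK a c) (mK b d)) Y)"
    by (rule lin_on_tlift_fun[OF vector_space_tscale Y]) (intro lin_tens_right hhop_mult_lin_left)
qed

lemma hhop_tmult_lin_left: "Y \<in> tspace K K tscale tscale \<Longrightarrow> lin_on (tspace K K tscale tscale) tscale tscale (\<lambda>X. mKK X Y)"
  unfolding tmult_def by (rule tlift_lin_on[OF subsp_K subsp_K vector_space_tscale hhop_tmult_kernel_bilin])

lemma hhop_tmult_lin_right: "X \<in> tspace K K tscale tscale \<Longrightarrow> lin_on (tspace K K tscale tscale) tscale tscale (\<lambda>Y. mKK X Y)"
  unfolding tmult_def
  by (rule lin_on_tlift_fun[OF vector_space_tscale], assumption) (rule tlift_lin_on[OF subsp_K subsp_K vector_space_tscale hhop_tmult_inner_bilin])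

lemma hhop_tmult_tspace: "X \<in> tspace K K tscale tscale \<Longrightarrow> Y \<in> tspace K K tscale tscale \<Longrightarrow> mKK X Y \<in> tspace K K tscale tscale"
  by (rule tmult_tspace[OF subsp_K subsp_K]) (auto intro: hhop_mult_in_K)

lemma hhop_comult_mult_tens: "\<Delta>K (mK (tens sh sh h g) (tens sh sh h' g')) = mKK (\<Delta>K (tens sh sh h g)) (\<Delta>K (tens sh sh h' g'))"
proof -
  let ?T = "tens tscale tscale :: ('h,'h,'k) tensor \<Rightarrow> ('h,'h,'k) tensor \<Rightarrow> _"
  have "\<Delta>K (mK (tens sh sh h g) (tens sh sh h' g')) = tlift_KK ?T (\<Delta>K (tens sh sh (h * h') (g' * g)))"
    by (simp add: hhop_mult_tens tlift_eta[OF hhop_comult_tspace])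
  also have "\<dots> = sweedler (h * h') (\<lambda>p1 p2. sweedler (g' * g) (\<lambda>q1 q2. ?T (tens sh sh p1 q1) (tens sh sh p2 q2)))"
    by (rule tlift_hhop_comult_tens[OF vector_space_tscale tens_bilin_on])
  also have "\<dots> = sweedler h (\<lambda>h1 h2. sweedler h' (\<lambda>h1' h2'. sweedler g' (\<lambda>g1' g2'. sweedler g (\<lambda>g1 g2.
        ?T (tens sh sh (h1 * h1') (g1' * g1)) (tens sh sh (h2 * h2') (g2' * g2))))))"
    by (simp add: lin_intros sweedler_mult[OF vector_space_tscale])
  also have "\<dots> = sweedler h (\<lambda>h1 h2. sweedler g (\<lambda>g1 g2. sweedler h' (\<lambda>h1' h2'. sweedler g' (\<lambda>g1' g2'.
        ?T (tens sh sh (h1 * h1') (g1' * g1)) (tens sh sh (h2 * h2') (g2' * g2))))))"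
  proof (rule tlift_fun_cong)
    fix h1 h2
    have "sweedler h' (\<lambda>h1' h2'. sweedler g' (\<lambda>g1' g2'. sweedler g (\<lambda>g1 g2.
        ?T (tens sh sh (h1 * h1') (g1' * g1)) (tens sh sh (h2 * h2') (g2' * g2)))))
      = sweedler h' (\<lambda>h1' h2'. sweedler g (\<lambda>g1 g2. sweedler g' (\<lambda>g1' g2'.
        ?T (tens sh sh (h1 * h1') (g1' * g1)) (tens sh sh (h2 * h2') (g2' * g2)))))"
      by (rule tlift_fun_cong, rule tlift_swap)
    also have "\<dots> = sweedler g (\<lambda>g1 g2. sweedler h' (\<lambda>h1' h2'. sweedler g' (\<lambda>g1' g2'.
        ?T (tens sh sh (h1 * h1') (g1' * g1)) (tens sh sh (h2 * h2') (g2' * g2)))))"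
      by (rule tlift_swap)
    finally show "sweedler h' (\<lambda>h1' h2'. sweedler g' (\<lambda>g1' g2'. sweedler g (\<lambda>g1 g2.
        ?T (tens sh sh (h1 * h1') (g1' * g1)) (tens sh sh (h2 * h2') (g2' * g2)))))
      = sweedler g (\<lambda>g1 g2. sweedler h' (\<lambda>h1' h2'. sweedler g' (\<lambda>g1' g2'.
        ?T (tens sh sh (h1 * h1') (g1' * g1)) (tens sh sh (h2 * h2') (g2' * g2)))))" .
  qed
  also have "\<dots> = tlift_KK (\<lambda>A B. tlift_KK (\<lambda>C D. ?T (mK A C) (mK B D)) (\<Delta>K (tens sh sh h' g'))) (\<Delta>K (tens sh sh h g))"
    by (simp add: tlift_hhop_comult_tens[OF vector_space_tscale hhop_tmult_kernel_bilin[OF hhop_comult_tspace]] tlift_hhop_comult_tens[OF vector_space_tscale hhop_tmult_inner_bilin] tens_in_K hhop_mult_tens)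
  also have "\<dots> = tlift_KK ?T (mKK (\<Delta>K (tens sh sh h g)) (\<Delta>K (tens sh sh h' g')))"
    by (rule tmult_tlift[OF subsp_K subsp_K vector_space_tscale tens_bilin_on hhop_mult_in_K hhop_mult_in_K hhop_comult_tspace hhop_comult_tspace, symmetric])
  also have "\<dots> = mKK (\<Delta>K (tens sh sh h g)) (\<Delta>K (tens sh sh h' g'))"
    by (rule tlift_eta[OF hhop_tmult_tspace[OF hhop_comult_tspace hhop_comult_tspace]])
  finally show ?thesis .
qed

lemma hhop_comult_mult:
  assumes x: "x \<in> K" and y: "y \<in> K"
  shows "\<Delta>K (mK x y) = mKK (\<Delta>K x) (\<Delta>K y)"
proof -
  have g: "\<Delta>K (mK (tens sh sh h g) y) = mKK (\<Delta>K (tens sh sh h g)) (\<Delta>K y)" for h g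
  proof (rule K_lin_eqI[OF _ _ _ y, where F="\<lambda>y. \<Delta>K (mK (tens sh sh h g) y)" and G="\<lambda>y. mKK (\<Delta>K (tens sh sh h g)) (\<Delta>K y)"])
    show "lin_on K tscale tscale (\<lambda>y. \<Delta>K (mK (tens sh sh h g) y))"
      by (rule lin_on_comp[OF hhop_mult_lin_right hhop_mult_in_K[OF tens_in_K] hhop_comult_lin])
    show "lin_on K tscale tscale (\<lambda>y. mKK (\<Delta>K (tens sh sh h g)) (\<Delta>K y))"
      by (rule lin_on_comp[OF hhop_comult_lin hhop_comult_tspace hhop_tmult_lin_right[OF hhop_comult_tspace]])
  qed (rule hhop_comult_mult_tens)
  show ?thesis
  proof (rule K_lin_eqI[OF _ _ _ x, where F="\<lambda>x. \<Delta>K (mK x y)" and G="\<lambda>x. mKK (\<Delta>K x) (\<Delta>K y)"])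
    show "lin_on K tscale tscale (\<lambda>x. \<Delta>K (mK x y))"
      by (rule lin_on_comp[OF hhop_mult_lin_left hhop_mult_in_K[OF _ y] hhop_comult_lin])
    show "lin_on K tscale tscale (\<lambda>x. mKK (\<Delta>K x) (\<Delta>K y))"
      by (rule lin_on_comp[OF hhop_comult_lin hhop_comult_tspace hhop_tmult_lin_left[OF hhop_comult_tspace]])
  qed (rule g)
qed

lemma hhop_comult_unit: "\<Delta>K uK = tens tscale tscale uK uK"
  unfolding hhop_unit_def hhop_comult_tens by (simp add: lin_intros sweedler_one[OF vector_space_tscale])

lemma hhop_counit_mult:
  assumes x: "x \<in> K" and y: "y \<in> K"
  shows "\<epsilon>K (mK x y) = \<epsilon>K x * \<epsilon>K y"
proof -
  have g: "\<epsilon>K (mK (tens sh sh h g) y) = \<epsilon>K (tens sh sh h g) * \<epsilon>K y" for h g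
  proof (rule K_lin_eqI[OF _ _ _ y, where F="\<lambda>y. \<epsilon>K (mK (tens sh sh h g) y)" and G="\<lambda>y. \<epsilon>K (tens sh sh h g) * \<epsilon>K y"])
    show "lin_on K tscale (*) (\<lambda>y. \<epsilon>K (mK (tens sh sh h g) y))"
      by (rule lin_on_comp[OF hhop_mult_lin_right hhop_mult_in_K[OF tens_in_K] hhop_counit_lin])
    show "lin_on K tscale (*) (\<lambda>y. \<epsilon>K (tens sh sh h g) * \<epsilon>K y)"
      by (rule lin_mult_const_left[OF hhop_counit_lin])
    fix h' g'
    show "\<epsilon>K (mK (tens sh sh h g) (tens sh sh h' g')) = \<epsilon>K (tens sh sh h g) * \<epsilon>K (tens sh sh h' g')"
      by (simp add: hhop_mult_tens hhop_counit_tens eps_mult algebra_simps)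
  qed
  show ?thesis
  proof (rule K_lin_eqI[OF _ _ _ x, where F="\<lambda>x. \<epsilon>K (mK x y)" and G="\<lambda>x. \<epsilon>K x * \<epsilon>K y"])
    show "lin_on K tscale (*) (\<lambda>x. \<epsilon>K (mK x y))"
      by (rule lin_on_comp[OF hhop_mult_lin_left hhop_mult_in_K[OF _ y] hhop_counit_lin])
    show "lin_on K tscale (*) (\<lambda>x. \<epsilon>K x * \<epsilon>K y)"
      by (rule lin_mult_const_right[OF hhop_counit_lin])
  qed (rule g)
qed

lemma hhop_counit_unit: "\<epsilon>K uK = 1"
  unfolding hhop_unit_def by (simp add: hhop_counit_tens eps_one)

lemma bialg_hhop: "bialg K tscale mK uK \<Delta>K \<epsilon>K"
  unfolding bialg_def using alg_hhop coalg_hhop hhop_comult_mult hhop_comult_unit hhop_counit_mult hhop_counit_unit by (auto simp: hhop_mult_def)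

section \<open>The left twisting datum\<close>

lemma pi_act_kernel_bilin: "bilin_on UNIV UNIV sh sh sa (\<lambda>h h'. ract (lact h a) h')" by (intro lin_intros)

lemma pi_act_tens: "\<pi> (tens sh sh h g) a = ract (lact h a) g"
  unfolding pi_act_def by (rule tHH.tlift_tens[OF vs_A pi_act_kernel_bilin]) auto

lemma pi_act_lin_K: "lin_on K tscale sa (\<lambda>X. \<pi> X a)"
  unfolding pi_act_def by (rule tlift_lin_on[OF subsp_H subsp_H vs_A pi_act_kernel_bilin])

lemma pi_act_lin_A: "lin_on UNIV sa sa (\<lambda>a. \<pi> X a)"
  unfolding pi_act_def by (intro lin_intros)

lemma pi_act_bilin: "bilin_on K UNIV tscale sa sa \<pi>"
  by (rule bilin_on_linI) (auto intro: pi_act_lin_K pi_act_lin_A)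

lemma pi_act_mult:
  assumes x: "x \<in> K" and y: "y \<in> K"
  shows "\<pi> (mK x y) a = \<pi> x (\<pi> y a)"
proof -
  have gen: "\<pi> (mK (tens sh sh h g) y) a = \<pi> (tens sh sh h g) (\<pi> y a)" for h g
  proof (rule K_lin_eqI[OF _ _ _ y, where F="\<lambda>y. \<pi> (mK (tens sh sh h g) y) a" and G="\<lambda>y. \<pi> (tens sh sh h g) (\<pi> y a)"])
    show "lin_on K tscale sa (\<lambda>y. \<pi> (mK (tens sh sh h g) y) a)"
      by (rule lin_on_comp[OF hhop_mult_lin_right hhop_mult_in_K[OF tens_in_K] pi_act_lin_K])
    show "lin_on K tscale sa (\<lambda>y. \<pi> (tens sh sh h g) (\<pi> y a))"
      by (rule lin_on_comp[OF pi_act_lin_K _ pi_act_lin_A]) auto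
    fix h' g'
    show "\<pi> (mK (tens sh sh h g) (tens sh sh h' g')) a = \<pi> (tens sh sh h g) (\<pi> (tens sh sh h' g') a)"
      by (simp add: hhop_mult_tens pi_act_tens lact_mult ract_mult lact_ract_commute)
  qed
  show ?thesis
  proof (rule K_lin_eqI[OF _ _ _ x, where F="\<lambda>x. \<pi> (mK x y) a" and G="\<lambda>x. \<pi> x (\<pi> y a)"])
    show "lin_on K tscale sa (\<lambda>x. \<pi> (mK x y) a)"
      by (rule lin_on_comp[OF hhop_mult_lin_left hhop_mult_in_K[OF _ y] pi_act_lin_K])
    show "lin_on K tscale sa (\<lambda>x. \<pi> x (\<pi> y a))" by (rule pi_act_lin_K)
  qed (rule gen)
qed

lemma pi_act_unit: "\<pi> uK a = a"
  unfolding hhop_unit_def by (simp add: pi_act_tens lact_one ract_one)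

lemma pi_act_distrib_times:
  assumes x: "x \<in> K"
  shows "\<pi> x (a * b) = tlift_KK (\<lambda>x1 x2. \<pi> x1 a * \<pi> x2 b) (\<Delta>K x)"
proof -
  have bl: "bilin_on K K tscale tscale sa (\<lambda>x1 x2. \<pi> x1 a * \<pi> x2 b)"
    by (rule bilin_on_linI) (auto intro: lin_multA_const_right lin_multA_const_left pi_act_lin_K)
  show ?thesis
  proof (rule K_lin_eqI[OF _ _ _ x])
    show "lin_on K tscale sa (\<lambda>x. \<pi> x (a * b))" by (rule pi_act_lin_K)
    show "lin_on K tscale sa (\<lambda>x. tlift_KK (\<lambda>x1 x2. \<pi> x1 a * \<pi> x2 b) (\<Delta>K x))"
      by (rule lin_on_comp[OF hhop_comult_lin hhop_comult_tspace tlift_lin_on[OF subsp_K subsp_K vs_A bl]])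
    fix h g
    have "\<pi> (tens sh sh h g) (a * b) = sweedler h (\<lambda>h1 h2. sweedler g (\<lambda>g1 g2. ract (lact h1 a) g1 * ract (lact h2 b) g2))"
      by (simp add: pi_act_tens lact_distrib_times lin_intros tlift_lin_pull[where sx=sa and sy=sa and f="\<lambda>z. ract z g"] ract_distrib_times)
    also have "\<dots> = tlift_KK (\<lambda>x1 x2. \<pi> x1 a * \<pi> x2 b) (\<Delta>K (tens sh sh h g))"
      by (simp add: tlift_hhop_comult[OF vs_A bl tens_in_K] tens_in_K tHH.tlift_tens[OF vs_A] lin_intros pi_act_tens)
    finally show "\<pi> (tens sh sh h g) (a * b) = tlift_KK (\<lambda>x1 x2. \<pi> x1 a * \<pi> x2 b) (\<Delta>K (tens sh sh h g))" .
  qed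
qed

lemma pi_act_one:
  assumes x: "x \<in> K"
  shows "\<pi> x 1 = sa (\<epsilon>K x) 1"
proof (rule K_lin_eqI[OF _ _ _ x])
  show "lin_on K tscale sa (\<lambda>x. \<pi> x 1)" by (rule pi_act_lin_K)
  show "lin_on K tscale sa (\<lambda>x. sa (\<epsilon>K x) 1)" by (rule lin_scale_scalar[OF vs_A hhop_counit_lin])
  fix h g
  show "\<pi> (tens sh sh h g) 1 = sa (\<epsilon>K (tens sh sh h g)) 1"
    by (simp add: pi_act_tens hhop_counit_tens lact_unit ract_scale_A ract_unit vector_spaceD[OF vs_A] mult.commute)
qed

lemma lmod_alg_pi_act: "lmod_alg K tscale mK uK \<Delta>K \<epsilon>K UNIV sa (*) 1 \<pi>"
  unfolding lmod_alg_def using pi_act_bilin pi_act_mult pi_act_unit pi_act_distrib_times pi_act_one by auto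

lemma psi_coact_tspace: "\<psi> a \<in> tspace K UNIV tscale sa"
  unfolding psi_coact_def
  by (intro tlift_in_subsp[OF subsp_tspace[OF subsp_K]] psir_tspace psil_tspace tspace_tens tens_in_K UNIV_I)

lemma tlift_psi_coact:
  assumes su: "vector_space su" and bl: "bilin_on K UNIV tscale sa su \<beta>"
  shows "tlift_KA \<beta> (\<psi> a) = tlift_AH (\<lambda>x h'. tlift_HA (\<lambda>h b. \<beta> (tens sh sh h (Sinv h')) b) (psil x)) (psir a)"
  unfolding psi_coact_def
  by (simp add: tKA.tlift_comp[OF su bl psir_tspace] tKA.tlift_comp[OF su bl psil_tspace]
      tlift_in_subsp[OF subsp_tspace[OF subsp_K] psil_tspace] tspace_tens tens_in_K tKA.tlift_tens[OF su bl])

lemma psi_coact_lin: "lin_on UNIV sa tscale \<psi>"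
  unfolding psi_coact_def by (intro lin_intros)

lemma psi_coact_counit: "tlift_KA (\<lambda>x b. sa (\<epsilon>K x) b) (\<psi> a) = a"
proof -
  have bl: "bilin_on K UNIV tscale sa sa (\<lambda>x b. sa (\<epsilon>K x) b)"
    by (rule bilin_on_linI) (auto intro: lin_scale_scalar[OF vs_A hhop_counit_lin] lin_scale_const[OF vs_A lin_id])
  have "tlift_KA (\<lambda>x b. sa (\<epsilon>K x) b) (\<psi> a)
      = tlift_AH (\<lambda>x h'. tlift_HA (\<lambda>h b. sa (\<epsilon> h') (sa (\<epsilon> h) b)) (psil x)) (psir a)"
    by (simp add: tlift_psi_coact[OF vs_A bl] hhop_counit_tens counit_Sinv vector_spaceD[OF vs_A] mult.commute)
  also have "\<dots> = tlift_AH (\<lambda>x h'. sa (\<epsilon> h') (tlift_HA (\<lambda>h b. sa (\<epsilon> h) b) (psil x))) (psir a)"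
    by (intro tlift_fun_cong tlift_scale_fun[OF vs_A])
  also have "\<dots> = a" by (simp add: psil_counit psir_counit)
  finally show ?thesis .
qed

lemma psi_coact_one: "\<psi> 1 = tens tscale sa uK 1"
  unfolding psi_coact_def hhop_unit_def
  by (simp add: lin_intros tlift_psir_one[OF vector_space_tscale] tlift_psil_one[OF vector_space_tscale] Sinv_one)

lemma psi_coact_mult: "\<psi> (a * b) = mKA (\<psi> a) (\<psi> b)"
proof -
  let ?T = "tens tscale sa :: ('h,'h,'k) tensor \<Rightarrow> 'a \<Rightarrow> _"
  have inner_bl: "bilin_on K UNIV tscale sa tscale (\<lambda>Y d. ?T (mK X Y) (c * d))" if "X \<in> K" for X c
    by (rule bilin_on_linI) (auto intro!: lin_tens_left lin_tens_right hhop_mult_lin_right lin_multA_const_left lin_id)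
  have outer_bl: "bilin_on K UNIV tscale sa tscale (\<lambda>X c. tlift_KA (\<lambda>Y d. ?T (mK X Y) (c * d)) (\<psi> b))"
    by (rule bilin_on_linI) (auto intro!: lin_on_tlift_fun[OF vector_space_tscale psi_coact_tspace] lin_tens_left lin_tens_right hhop_mult_lin_left lin_multA_const_right lin_id)
  have in1: "mKA (\<psi> a) (\<psi> b) \<in> tspace K UNIV tscale sa"
    by (rule tmult_tspace[OF subsp_K subsp_A]) (auto intro: hhop_mult_in_K psi_coact_tspace)
  have "\<psi> (a * b) = tlift_KA ?T (\<psi> (a * b))" by (rule tlift_eta[OF psi_coact_tspace, symmetric])
  also have "\<dots> = tlift_AH (\<lambda>x h'. tlift_HA (\<lambda>h c. ?T (tens sh sh h (Sinv h')) c) (psil x)) (psir (a * b))"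
    by (rule tlift_psi_coact[OF vector_space_tscale tens_bilin_on])
  also have "\<dots> = tlift_AH (\<lambda>a1 x. tlift_AH (\<lambda>b1 y. tlift_HA (\<lambda>h1 c1. tlift_HA (\<lambda>h2 c2. ?T (tens sh sh (h1 * h2) (Sinv (x * y))) (c1 * c2)) (psil b1)) (psil a1)) (psir b)) (psir a)"
    by (simp add: lin_intros tlift_psir_mult[OF vector_space_tscale] tlift_psil_mult[OF vector_space_tscale])
  also have "\<dots> = tlift_AH (\<lambda>a1 x. tlift_HA (\<lambda>h1 c1. tlift_AH (\<lambda>b1 y. tlift_HA (\<lambda>h2 c2. ?T (tens sh sh (h1 * h2) (Sinv (x * y))) (c1 * c2)) (psil b1)) (psir b)) (psil a1)) (psir a)"
    by (rule tlift_fun_cong, rule tlift_swap)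
  also have "\<dots> = tlift_KA (\<lambda>X c. tlift_KA (\<lambda>Y d. ?T (mK X Y) (c * d)) (\<psi> b)) (\<psi> a)"
    by (simp add: tlift_psi_coact[OF vector_space_tscale outer_bl] tlift_psi_coact[OF vector_space_tscale inner_bl] tens_in_K hhop_mult_tens Sinv_antimult)
  also have "\<dots> = tlift_KA ?T (mKA (\<psi> a) (\<psi> b))"
    by (rule tmult_tlift[OF subsp_K subsp_A vector_space_tscale tens_bilin_on hhop_mult_in_K _ psi_coact_tspace psi_coact_tspace, symmetric]) auto
  also have "\<dots> = mKA (\<psi> a) (\<psi> b)" by (rule tlift_eta[OF in1])
  finally show ?thesis .
qed

lemma tens3_KA_bilin12: "bilin_on K K tscale tscale tscale (\<lambda>u v. tens3 tscale tscale sa u v w)"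
  using trilin_on_bilin12[OF tens3_trilin[of K K UNIV] UNIV_I] .

lemma tens3_KA_bilin23: "u \<in> K \<Longrightarrow> bilin_on K UNIV tscale sa tscale (\<lambda>v w. tens3 tscale tscale sa u v w)"
  using trilin_on_bilin23[OF tens3_trilin[of K K UNIV]] .

lemma psi_coact_tassoc_kernel_bilin:
  "bilin_on K UNIV tscale sa tscale (\<lambda>p w. tlift_KK (\<lambda>u v. tens3 tscale tscale sa u v w) (\<Delta>K p))"
proof (rule bilin_on_linI)
  fix w :: 'a
  show "lin_on K tscale tscale (\<lambda>p. tlift_KK (\<lambda>u v. tens3 tscale tscale sa u v w) (\<Delta>K p))"
    by (rule lin_on_comp[OF hhop_comult_lin hhop_comult_tspace tlift_lin_on[OF subsp_K subsp_K vector_space_tscale tens3_KA_bilin12]])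
next
  fix p
  show "lin_on UNIV sa tscale (\<lambda>w. tlift_KK (\<lambda>u v. tens3 tscale tscale sa u v w) (\<Delta>K p))"
    by (rule lin_on_tlift_fun[OF vector_space_tscale hhop_comult_tspace]) (rule lin_onI, simp_all add: tens_add_right tens_scale_right)
qed

lemma psi_coact_tmap_kernel_bilin:
  "bilin_on K UNIV tscale sa tscale (\<lambda>u p. tlift_KA (\<lambda>v w. tens3 tscale tscale sa u v w) (\<psi> p))"
proof (rule bilin_on_linI)
  fix p
  show "lin_on K tscale tscale (\<lambda>u. tlift_KA (\<lambda>v w. tens3 tscale tscale sa u v w) (\<psi> p))"
    by (rule lin_on_tlift_fun[OF vector_space_tscale psi_coact_tspace]) (rule lin_onI, simp_all add: tens_add_left tens_scale_left)
next
  fix u assume "u \<in> K"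
  then show "lin_on UNIV sa tscale (\<lambda>p. tlift_KA (\<lambda>v w. tens3 tscale tscale sa u v w) (\<psi> p))"
    by (intro lin_on_comp[OF psi_coact_lin _ tlift_lin_on[OF subsp_K subsp_A vector_space_tscale tens3_KA_bilin23]] psi_coact_tspace)
qed

lemma tlift_psi_coact_psi_coact:
  "tlift_KA (\<lambda>u p. tlift_KA (\<lambda>v w. tens3 tscale tscale sa u v w) (\<psi> p)) (\<psi> a)
   = tlift_AH (\<lambda>c y. tlift_HA (\<lambda>h b. sweedler h (\<lambda>h1 h2. sweedler y (\<lambda>g' g.
       tens3 tscale tscale sa (tens sh sh h1 (Sinv g)) (tens sh sh h2 (Sinv g')) b))) (psil c)) (psir a)"
  (is "_ = tlift_AH (\<lambda>c y. tlift_HA (\<lambda>h b. sweedler h (\<lambda>h1 h2. sweedler y (\<lambda>g' g. ?b h1 g h2 g' b))) (psil c)) (psir a)")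
proof -
  have "tlift_KA (\<lambda>u p. tlift_KA (\<lambda>v w. tens3 tscale tscale sa u v w) (\<psi> p)) (\<psi> a)
      = tlift_AH (\<lambda>x g. tlift_HA (\<lambda>h b. tlift_AH (\<lambda>x2 g'. tlift_HA (\<lambda>h2 b2. ?b h g h2 g' b2) (psil x2)) (psir b)) (psil x)) (psir a)"
    by (simp add: tlift_psi_coact[OF vector_space_tscale psi_coact_tmap_kernel_bilin] tlift_psi_coact[OF vector_space_tscale tens3_KA_bilin23] tens_in_K)
  also have "\<dots> = tlift_AH (\<lambda>x g. tlift_HA (\<lambda>h b. tlift_HA (\<lambda>h2 c. tlift_AH (\<lambda>b2 g'. ?b h g h2 g' b2) (psir c)) (psil b)) (psil x)) (psir a)"
    by (intro tlift_fun_cong tlift_psil_psir_bicomod[OF vector_space_tscale]) (intro lin_intros)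
  also have "\<dots> = tlift_AH (\<lambda>x g. tlift_HA (\<lambda>h c. sweedler h (\<lambda>h1 h2. tlift_AH (\<lambda>b2 g'. ?b h1 g h2 g' b2) (psir c))) (psil x)) (psir a)"
    by (intro tlift_fun_cong tlift_psil_coassoc[OF vector_space_tscale, symmetric]) (intro lin_intros)
  also have "\<dots> = tlift_AH (\<lambda>x g. tlift_HA (\<lambda>h c. tlift_AH (\<lambda>b2 g'. sweedler h (\<lambda>h1 h2. ?b h1 g h2 g' b2)) (psir c)) (psil x)) (psir a)"
    by (rule tlift_fun_cong, rule tlift_fun_cong, rule tlift_swap)
  also have "\<dots> = tlift_AH (\<lambda>x g. tlift_AH (\<lambda>c g'. tlift_HA (\<lambda>h b2. sweedler h (\<lambda>h1 h2. ?b h1 g h2 g' b2)) (psil c)) (psir x)) (psir a)"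
    by (intro tlift_fun_cong tlift_psil_psir_bicomod[OF vector_space_tscale, symmetric]) (intro lin_intros)
  also have "\<dots> = tlift_AH (\<lambda>c y. sweedler y (\<lambda>g' g. tlift_HA (\<lambda>h b2. sweedler h (\<lambda>h1 h2. ?b h1 g h2 g' b2)) (psil c))) (psir a)"
    by (rule tlift_psir_coassoc[OF vector_space_tscale]) (intro lin_intros)
  also have "\<dots> = tlift_AH (\<lambda>c y. tlift_HA (\<lambda>h b. sweedler y (\<lambda>g' g. sweedler h (\<lambda>h1 h2. ?b h1 g h2 g' b))) (psil c)) (psir a)"
    by (rule tlift_fun_cong, rule tlift_swap)
  also have "\<dots> = tlift_AH (\<lambda>c y. tlift_HA (\<lambda>h b. sweedler h (\<lambda>h1 h2. sweedler y (\<lambda>g' g. ?b h1 g h2 g' b))) (psil c)) (psir a)"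
    by (rule tlift_fun_cong, rule tlift_fun_cong, rule tlift_swap)
  finally show ?thesis .
qed

lemma psi_coact_coassoc:
  "tassoc K K UNIV tscale tscale sa (tmap K UNIV tscale sa tscale sa \<Delta>K id (\<psi> a))
     = tmap K UNIV tscale sa tscale tscale id \<psi> (\<psi> a)"
proof (rule tassoc_tmap_eqI[OF subsp_K subsp_K subsp_A hhop_comult_tspace psi_coact_tspace psi_coact_tspace])
  show "tlift_KA (\<lambda>p w. tlift_KK (\<lambda>u v. tens3 tscale tscale sa u v w) (\<Delta>K p)) (\<psi> a)
      = tlift_KA (\<lambda>u p. tlift_KA (\<lambda>v w. tens3 tscale tscale sa u v w) (\<psi> p)) (\<psi> a)"
    unfolding tlift_psi_coact_psi_coact
    by (simp add: tlift_psi_coact[OF vector_space_tscale psi_coact_tassoc_kernel_bilin] lin_intros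
        tlift_hhop_comult_tens[OF vector_space_tscale tens3_KA_bilin12] Sinv_anticomult[OF vector_space_tscale])
qed

lemma lcomod_alg_psi_coact: "lcomod_alg K tscale mK uK \<Delta>K \<epsilon>K UNIV sa (*) 1 \<psi>"
  unfolding lcomod_alg_def using psi_coact_tspace psi_coact_lin psi_coact_coassoc psi_coact_counit psi_coact_mult psi_coact_one by auto

lemma psi_coact_pi_act:
  assumes x: "x \<in> K"
  shows "\<psi> (\<pi> x a) = tmap K UNIV tscale sa tscale sa id (\<pi> x) (\<psi> a)"
proof (rule K_lin_eqI[OF _ _ _ x, where F="\<lambda>x. \<psi> (\<pi> x a)" and G="\<lambda>x. tmap K UNIV tscale sa tscale sa id (\<pi> x) (\<psi> a)"])
  show "lin_on K tscale tscale (\<lambda>x. \<psi> (\<pi> x a))"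
    by (rule lin_on_comp[OF pi_act_lin_K _ psi_coact_lin]) auto
  show "lin_on K tscale tscale (\<lambda>x. tmap K UNIV tscale sa tscale sa id (\<pi> x) (\<psi> a))"
    unfolding tmap_def by (rule lin_on_tlift_fun[OF vector_space_tscale psi_coact_tspace]) (intro lin_tens_right pi_act_lin_K)
  fix h g
  let ?T = "tens tscale sa :: ('h,'h,'k) tensor \<Rightarrow> 'a \<Rightarrow> _"
  have in1: "tmap K UNIV tscale sa tscale sa id (\<pi> (tens sh sh h g)) (\<psi> a) \<in> tspace K UNIV tscale sa"
    by (rule tmap_tspace[OF subsp_K subsp_A subsp_K subsp_A _ _ psi_coact_tspace]) auto
  have "\<psi> (\<pi> (tens sh sh h g) a) = tlift_KA ?T (\<psi> (ract (lact h a) g))"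
    by (simp add: pi_act_tens tlift_eta[OF psi_coact_tspace])
  also have "\<dots> = tlift_AH (\<lambda>c g'. tlift_HA (\<lambda>k b. ?T (tens sh sh k (Sinv g')) (ract (lact h b) g)) (psil c)) (psir a)"
    by (simp add: tlift_psi_coact[OF vector_space_tscale tens_bilin_on] lin_intros tlift_psir_ract[OF vector_space_tscale] tlift_psir_lact[OF vector_space_tscale] tlift_psil_ract[OF vector_space_tscale] tlift_psil_lact[OF vector_space_tscale])
  also have "\<dots> = tlift_KA (\<lambda>v w. ?T v (\<pi> (tens sh sh h g) w)) (\<psi> a)"
  proof -
    have bl: "bilin_on K UNIV tscale sa tscale (\<lambda>v w. ?T v (\<pi> (tens sh sh h g) w))"
      by (rule bilin_on_linI) (auto intro!: lin_tens_left lin_tens_right lin_id pi_act_lin_A)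
    show ?thesis by (subst tlift_psi_coact[OF vector_space_tscale bl]) (simp add: pi_act_tens)
  qed
  also have "\<dots> = tlift_KA ?T (tmap K UNIV tscale sa tscale sa id (\<pi> (tens sh sh h g)) (\<psi> a))"
    by (subst tmap_tlift[OF subsp_K subsp_A subsp_K subsp_A vector_space_tscale tens_bilin_on _ _ psi_coact_tspace]) auto
  also have "\<dots> = tmap K UNIV tscale sa tscale sa id (\<pi> (tens sh sh h g)) (\<psi> a)"
    by (rule tlift_eta[OF in1])
  finally show "\<psi> (\<pi> (tens sh sh h g) a) = tmap K UNIV tscale sa tscale sa id (\<pi> (tens sh sh h g)) (\<psi> a)" .
qed

section \<open>The isomorphism \<open>\<lambda>\<close>\<close>

lemma lt_prod_kernel_bilin: "bilin_on K UNIV tscale sa sa (\<lambda>X c. c * \<pi> X y)"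
proof (rule bilin_on_linI)
  fix c show "lin_on K tscale sa (\<lambda>X. c * \<pi> X y)" by (intro lin_multA_const_left pi_act_lin_K)
next
  fix X show "lin_on UNIV sa sa (\<lambda>c. c * \<pi> X y)" by (intro lin_intros)
qed

lemma lt_prod_unfold: "lt_prod K UNIV tscale sa (*) \<pi> \<psi> x y
   = tlift_AH (\<lambda>x' h'. tlift_HA (\<lambda>h b. b * ract (lact h y) (Sinv h')) (psil x')) (psir x)"
  unfolding lt_prod_def by (simp add: tlift_psi_coact[OF vs_A lt_prod_kernel_bilin] pi_act_tens)

lemma lam_lin: "lin_on UNIV sa sa \<Lambda>" unfolding lam_def by (intro lin_intros)
lemma lam_one: "\<Lambda> 1 = 1"
  unfolding lam_def by (subst tlift_psir_one[OF vs_A]) (intro lin_intros, simp add: Sinv_one ract_one)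

lemma tlift_psir_lam:
  assumes su: "vector_space su" and bl: "bilin_on UNIV UNIV sa sh su \<beta>"
  shows "tlift_AH \<beta> (psir (\<Lambda> a)) = tlift_AH (\<lambda>c' y. sweedler y (\<lambda>g' g. \<beta> (ract c' (Sinv g)) g')) (psir a)"
proof -
  have "tlift_AH \<beta> (psir (\<Lambda> a)) = tlift_AH (\<lambda>c g. tlift_AH \<beta> (psir (ract c (Sinv g)))) (psir a)"
    unfolding lam_def by (rule tlift_lin_pull[where sx=sa and sy=su]) (intro lin_intros lin_on_bilin_left[OF bl] lin_on_bilin_right[OF bl] lin_on_bilin_curry[OF bl] su)
  also have "\<dots> = tlift_AH (\<lambda>c g. tlift_AH (\<lambda>c' g'. \<beta> (ract c' (Sinv g)) g') (psir c)) (psir a)"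
    by (intro tlift_fun_cong tlift_psir_ract[OF su bl])
  also have "\<dots> = tlift_AH (\<lambda>c' y. sweedler y (\<lambda>g' g. \<beta> (ract c' (Sinv g)) g')) (psir a)"
    by (rule tlift_psir_coassoc[OF su]) (intro lin_intros lin_on_bilin_left[OF bl] lin_on_bilin_right[OF bl] lin_on_bilin_curry[OF bl] su)
  finally show ?thesis .
qed

lemma tlift_psir_lam_inv:
  assumes su: "vector_space su" and bl: "bilin_on UNIV UNIV sa sh su \<beta>"
  shows "tlift_AH \<beta> (psir (\<Lambda>inv a)) = tlift_AH (\<lambda>c' y. sweedler y (\<lambda>g' g. \<beta> (ract c' g) g')) (psir a)"
proof -
  have "tlift_AH \<beta> (psir (\<Lambda>inv a)) = tlift_AH (\<lambda>c g. tlift_AH \<beta> (psir (ract c g))) (psir a)"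
    unfolding lam_inv_def by (rule tlift_lin_pull[where sx=sa and sy=su]) (intro lin_intros lin_on_bilin_left[OF bl] lin_on_bilin_right[OF bl] lin_on_bilin_curry[OF bl] su)
  also have "\<dots> = tlift_AH (\<lambda>c g. tlift_AH (\<lambda>c' g'. \<beta> (ract c' g) g') (psir c)) (psir a)"
    by (intro tlift_fun_cong tlift_psir_ract[OF su bl])
  also have "\<dots> = tlift_AH (\<lambda>c' y. sweedler y (\<lambda>g' g. \<beta> (ract c' g) g')) (psir a)"
    by (rule tlift_psir_coassoc[OF su]) (intro lin_intros lin_on_bilin_left[OF bl] lin_on_bilin_right[OF bl] lin_on_bilin_curry[OF bl] su)
  finally show ?thesis .
qed

lemma lam_inv_lam: "\<Lambda>inv (\<Lambda> a) = a"
proof -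
  have "\<Lambda>inv (\<Lambda> a) = tlift_AH (\<lambda>c' y. sweedler y (\<lambda>g' g. ract (ract c' (Sinv g)) g')) (psir a)"
    unfolding lam_inv_def[of sa sh ract psir "\<Lambda> a"] by (rule tlift_psir_lam[OF vs_A]) (intro lin_intros)
  also have "\<dots> = tlift_AH (\<lambda>c' y. ract c' (sweedler y (\<lambda>g' g. Sinv g * g'))) (psir a)"
    by (intro tlift_fun_cong tlift_lin_pull_eq[where sx=sh and sy=sa]) (intro lin_intros, simp add: ract_mult)
  also have "\<dots> = tlift_AH (\<lambda>c' y. sa (\<epsilon> y) c') (psir a)"
    by (simp add: sweedler_Sinv_mult_left ract_scale_H ract_one)
  also have "\<dots> = a" using psir_counit .
  finally show ?thesis .
qed

lemma lam_lam_inv: "\<Lambda> (\<Lambda>inv a) = a"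
proof -
  have "\<Lambda> (\<Lambda>inv a) = tlift_AH (\<lambda>c' y. sweedler y (\<lambda>g' g. ract (ract c' g) (Sinv g'))) (psir a)"
    unfolding lam_def[of sa sh S ract psir "\<Lambda>inv a"] by (rule tlift_psir_lam_inv[OF vs_A]) (intro lin_intros)
  also have "\<dots> = tlift_AH (\<lambda>c' y. ract c' (sweedler y (\<lambda>g' g. g * Sinv g'))) (psir a)"
    by (intro tlift_fun_cong tlift_lin_pull_eq[where sx=sh and sy=sa]) (intro lin_intros, simp add: ract_mult)
  also have "\<dots> = tlift_AH (\<lambda>c' y. sa (\<epsilon> y) c') (psir a)"
    by (simp add: sweedler_mult_Sinv_right ract_scale_H ract_one)
  also have "\<dots> = a" using psir_counit .
  finally show ?thesis .
qed

lemma sweedler_ract_times_Sinv: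
  "sweedler y (\<lambda>g2 h1. ract (ract c h1 * Y) (Sinv (g1 * g2))) = sweedler g1 (\<lambda>s1 s2. ract c (Sinv s2) * ract Y (Sinv y * Sinv s1))"
proof -
  have "sweedler y (\<lambda>g2 h1. ract (ract c h1 * Y) (Sinv (g1 * g2)))
      = sweedler y (\<lambda>g2 h1. sweedler g2 (\<lambda>r1 r2. sweedler g1 (\<lambda>s1 s2. ract c (h1 * (Sinv r2 * Sinv s2)) * ract Y (Sinv r1 * Sinv s1))))"
  proof (intro tlift_fun_cong)
    fix g2 h1
    have "ract (ract c h1 * Y) (Sinv (g1 * g2)) = sweedler (Sinv g2 * Sinv g1) (\<lambda>k1 k2. ract (ract c h1) k1 * ract Y k2)"
      by (simp add: Sinv_antimult ract_distrib_times)
    also have "\<dots> = sweedler (Sinv g2) (\<lambda>p1 p2. sweedler (Sinv g1) (\<lambda>q1 q2. ract (ract c h1) (p1 * q1) * ract Y (p2 * q2)))"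
      by (simp add: lin_intros sweedler_mult[OF vs_A])
    also have "\<dots> = sweedler g2 (\<lambda>r1 r2. sweedler g1 (\<lambda>s1 s2. ract c (h1 * (Sinv r2 * Sinv s2)) * ract Y (Sinv r1 * Sinv s1)))"
      by (simp add: lin_intros Sinv_anticomult[OF vs_A] ract_mult)
    finally show "ract (ract c h1 * Y) (Sinv (g1 * g2)) = sweedler g2 (\<lambda>r1 r2. sweedler g1 (\<lambda>s1 s2. ract c (h1 * (Sinv r2 * Sinv s2)) * ract Y (Sinv r1 * Sinv s1)))" .
  qed
  also have "\<dots> = sweedler y (\<lambda>r1 t. sweedler t (\<lambda>r2 h1. sweedler g1 (\<lambda>s1 s2. ract c (h1 * (Sinv r2 * Sinv s2)) * ract Y (Sinv r1 * Sinv s1))))"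
    by (rule sweedler_coassoc[OF vs_A]) (intro lin_intros)
  also have "\<dots> = sweedler y (\<lambda>r1 t. sweedler g1 (\<lambda>s1 s2. sweedler t (\<lambda>r2 h1. ract c (h1 * (Sinv r2 * Sinv s2)) * ract Y (Sinv r1 * Sinv s1))))"
    by (intro tlift_fun_cong tlift_swap)
  also have "\<dots> = sweedler y (\<lambda>r1 t. sweedler g1 (\<lambda>s1 s2. sa (\<epsilon> t) (ract c (Sinv s2) * ract Y (Sinv r1 * Sinv s1))))"
  proof (intro tlift_fun_cong)
    fix r1 t s1 s2
    have "sweedler t (\<lambda>r2 h1. ract c (h1 * (Sinv r2 * Sinv s2)) * ract Y (Sinv r1 * Sinv s1))
        = ract c (sweedler t (\<lambda>r2 h1. h1 * Sinv r2) * Sinv s2) * ract Y (Sinv r1 * Sinv s1)"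
      by (rule tlift_lin_pull_eq[where sx=sh and sy=sa]) (intro lin_intros, simp add: mult.assoc)
    then show "sweedler t (\<lambda>r2 h1. ract c (h1 * (Sinv r2 * Sinv s2)) * ract Y (Sinv r1 * Sinv s1))
        = sa (\<epsilon> t) (ract c (Sinv s2) * ract Y (Sinv r1 * Sinv s1))"
      by (simp add: sweedler_mult_Sinv_right multH_scale_left ract_scale_H multA_scale_left)
  qed
  also have "\<dots> = sweedler y (\<lambda>r1 t. sa (\<epsilon> t) (sweedler g1 (\<lambda>s1 s2. ract c (Sinv s2) * ract Y (Sinv r1 * Sinv s1))))"
    by (intro tlift_fun_cong tlift_scale_fun[OF vs_A])
  also have "\<dots> = sweedler g1 (\<lambda>s1 s2. ract c (Sinv s2) * ract Y (Sinv y * Sinv s1))"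
    by (rule sweedler_counit_right_scale[where su=sa]) (intro lin_intros)
  finally show ?thesis .
qed

lemma lam_lr_prod_expand:
  "\<Lambda> (lr_prod sh sa lact ract psil psir a b)
   = tlift_AH (\<lambda>x g1. tlift_HA (\<lambda>h c. tlift_AH (\<lambda>d y. sweedler g1 (\<lambda>s1 s2.
       ract c (Sinv s2) * ract (lact h d) (Sinv y * Sinv s1))) (psir b)) (psil x)) (psir a)"
proof -
  have "\<Lambda> (lr_prod sh sa lact ract psil psir a b)
     = tlift_HA (\<lambda>h a0. tlift_AH (\<lambda>b0 h1. tlift_AH (\<lambda>c g. ract c (Sinv g)) (psir (ract a0 h1 * lact h b0))) (psir b)) (psil a)"
    unfolding lam_def lr_prod_def
    by (simp add: lin_intros tlift_lin_pull[where sx=sa and sy=sa and f="\<lambda>z. tlift_AH (\<lambda>c g. ract c (Sinv g)) (psir z)"])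
  also have "\<dots> = tlift_HA (\<lambda>h a0. tlift_AH (\<lambda>b0 h1. tlift_AH (\<lambda>c g1. tlift_AH (\<lambda>d g2.
      ract (ract c h1 * lact h d) (Sinv (g1 * g2))) (psir b0)) (psir a0)) (psir b)) (psil a)"
    by (simp add: lin_intros tlift_psir_mult[OF vs_A] tlift_psir_ract[OF vs_A] tlift_psir_lact[OF vs_A])
  also have "\<dots> = tlift_HA (\<lambda>h a0. tlift_AH (\<lambda>c g1. tlift_AH (\<lambda>b0 h1. tlift_AH (\<lambda>d g2.
      ract (ract c h1 * lact h d) (Sinv (g1 * g2))) (psir b0)) (psir b)) (psir a0)) (psil a)"
    by (intro tlift_fun_cong tlift_swap)
  also have "\<dots> = tlift_AH (\<lambda>x g1. tlift_HA (\<lambda>h c. tlift_AH (\<lambda>b0 h1. tlift_AH (\<lambda>d g2.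
      ract (ract c h1 * lact h d) (Sinv (g1 * g2))) (psir b0)) (psir b)) (psil x)) (psir a)"
    by (rule tlift_psil_psir_bicomod[OF vs_A, symmetric]) (intro lin_intros)
  also have "\<dots> = tlift_AH (\<lambda>x g1. tlift_HA (\<lambda>h c. tlift_AH (\<lambda>d y. sweedler y (\<lambda>g2 h1.
      ract (ract c h1 * lact h d) (Sinv (g1 * g2)))) (psir b)) (psil x)) (psir a)"
    by (intro tlift_fun_cong tlift_psir_coassoc[OF vs_A]) (intro lin_intros)
  finally show ?thesis by (simp only: sweedler_ract_times_Sinv)
qed

lemma ract_lact_lam:
  "ract (lact h (\<Lambda> b)) k = tlift_AH (\<lambda>d y. ract (lact h d) (Sinv y * k)) (psir b)"
  unfolding lam_def
  by (simp add: lin_intros tlift_lin_pull[where sx=sa and sy=sa and f="\<lambda>z. ract (lact h z) k"]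
      lact_ract_commute[symmetric] ract_mult)

lemma lt_prod_lam_expand:
  "lt_prod K UNIV tscale sa (*) \<pi> \<psi> (\<Lambda> a) (\<Lambda> b)
   = tlift_AH (\<lambda>c y. tlift_HA (\<lambda>h e. tlift_AH (\<lambda>d y'. sweedler y (\<lambda>g' g.
       ract e (Sinv g) * ract (lact h d) (Sinv y' * Sinv g'))) (psir b)) (psil c)) (psir a)"
proof -
  have "lt_prod K UNIV tscale sa (*) \<pi> \<psi> (\<Lambda> a) (\<Lambda> b)
      = tlift_AH (\<lambda>x' h'. tlift_HA (\<lambda>h e. e * ract (lact h (\<Lambda> b)) (Sinv h')) (psil x')) (psir (\<Lambda> a))"
    by (rule lt_prod_unfold)
  also have "\<dots> = tlift_AH (\<lambda>c y. sweedler y (\<lambda>g' g.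
      tlift_HA (\<lambda>h e. e * ract (lact h (\<Lambda> b)) (Sinv g')) (psil (ract c (Sinv g))))) (psir a)"
    by (rule tlift_psir_lam[OF vs_A]) (intro lin_intros)
  also have "\<dots> = tlift_AH (\<lambda>c y. sweedler y (\<lambda>g' g.
      tlift_HA (\<lambda>h e. ract e (Sinv g) * ract (lact h (\<Lambda> b)) (Sinv g')) (psil c))) (psir a)"
    by (simp add: lin_intros tlift_psil_ract[OF vs_A])
  also have "\<dots> = tlift_AH (\<lambda>c y. tlift_HA (\<lambda>h e.
      sweedler y (\<lambda>g' g. ract e (Sinv g) * ract (lact h (\<Lambda> b)) (Sinv g'))) (psil c)) (psir a)"
    by (intro tlift_fun_cong tlift_swap)
  also have "\<dots> = tlift_AH (\<lambda>c y. tlift_HA (\<lambda>h e. sweedler y (\<lambda>g' g.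
      tlift_AH (\<lambda>d y'. ract e (Sinv g) * ract (lact h d) (Sinv y' * Sinv g')) (psir b))) (psil c)) (psir a)"
    by (simp only: ract_lact_lam tlift_lin_pull[OF lin_multA_const_left[OF lin_id]])
  also have "\<dots> = tlift_AH (\<lambda>c y. tlift_HA (\<lambda>h e. tlift_AH (\<lambda>d y'. sweedler y (\<lambda>g' g.
      ract e (Sinv g) * ract (lact h d) (Sinv y' * Sinv g'))) (psir b)) (psil c)) (psir a)"
    by (intro tlift_fun_cong tlift_swap)
  finally show ?thesis .
qed

lemma lam_mult:
  "\<Lambda> (lr_prod sh sa lact ract psil psir a b) = lt_prod K UNIV tscale sa (*) \<pi> \<psi> (\<Lambda> a) (\<Lambda> b)"
  unfolding lam_lr_prod_expand lt_prod_lam_expand by (intro tlift_fun_cong tlift_swap refl)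

lemma left_twisting_datum_hhop: "left_twisting_datum K tscale mK uK \<Delta>K \<epsilon>K UNIV sa (*) 1 \<pi> \<psi>"
  unfolding left_twisting_datum_def
  using bialg_hhop A lmod_alg_pi_act lcomod_alg_psi_coact psi_coact_pi_act by blast

lemma lam_alg_iso:
  "alg_iso_with_inv UNIV sa (lr_prod sh sa lact ract psil psir) 1 UNIV sa (lt_prod K UNIV tscale sa (*) \<pi> \<psi>) 1 \<Lambda> \<Lambda>inv"
  unfolding alg_iso_with_inv_def alg_hom_def using lam_lin lam_mult lam_one lam_inv_lam lam_lam_inv by blast

end

theorem theorem4p7:
  fixes sh :: "'k::field \<Rightarrow> 'h::ring_1 \<Rightarrow> 'h"
    and sa :: "'k \<Rightarrow> 'a::ring_1 \<Rightarrow> 'a"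
    and \<Delta> :: "'h \<Rightarrow> ('h, 'h, 'k) tensor" and \<epsilon> :: "'h \<Rightarrow> 'k" and S :: "'h \<Rightarrow> 'h"
    and lact :: "'h \<Rightarrow> 'a \<Rightarrow> 'a" and ract :: "'a \<Rightarrow> 'h \<Rightarrow> 'a"
    and psil :: "'a \<Rightarrow> ('h, 'a, 'k) tensor" and psir :: "'a \<Rightarrow> ('a, 'h, 'k) tensor"
  assumes A: "alg UNIV sa (*) 1"
    and H: "hopf UNIV sh (*) 1 \<Delta> \<epsilon> S"
    and Sbij: "bij S"
    and D: "lr_datum sh \<Delta> \<epsilon> sa lact ract psil psir"
  shows "left_twisting_datum (hhop_carrier sh) tscale (hhop_mult sh) (hhop_unit sh)
            (hhop_comult sh \<Delta>) (hhop_counit sh \<epsilon>) UNIV sa (*) 1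
            (pi_act sh lact ract) (psi_coact sh sa S psil psir)
       \<and> alg_iso_with_inv UNIV sa (lr_prod sh sa lact ract psil psir) 1
            UNIV sa (lt_prod (hhop_carrier sh) UNIV tscale sa (*) (pi_act sh lact ract)
                       (psi_coact sh sa S psil psir)) 1
            (lam sa sh S ract psir) (lam_inv sa sh ract psir)"
proof -
  interpret lr_twisting_hopf sh sa \<Delta> \<epsilon> S lact ract psil psir
    using A H Sbij D by (rule lr_twisting_hopf.intro)
  show ?thesis
    unfolding hhop_carrier_def using left_twisting_datum_hhop lam_alg_iso ..
qed

end
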